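(* Let $(G=(V,E),L,w)$ be a WTAP instance with a fixed root $r\in V$, let $F\subseteq L$ be a WTAP solution (i.e. $\bigcup_{\ell\in F}P_\ell=E$), and let $U\subseteq L_{\mathrm{up}}$ be a set of up-links such that the sets $P_u$, $u\in U$, are pairwise disjoint. Then for every $\epsilon>0$ there exist a partition $\mathcal{C}$ of $F$ into $\lceil 1/\epsilon\rceil$-thin sets and a set $R\subseteq U$ such that (1) for every $u\in U\setminus R$ there is some $C\in\mathcal{C}$ with $P_u\subseteq\bigcup_{\ell\in C}P_\ell$, and (2) $w(R)\le\epsilon\cdot w(U)$.
   Context: A WTAP instance consists of a spanning tree $G=(V,E)$, a set of links $L\subseteq\binom{V}{2}$, and positive weights $w\colon L\to\mathbb{R}_{>0}$; $w(X)=\sum_{\ell\in X}w(\ell)$. For a link $\ell$, $P_\ell\subseteq E$ is the edge set of the unique path in $G$ between the endpoints of $\ell$, and $V_\ell$ the vertex set of that path (including endpoints). With respect to the root $r$, an up-link is a link one of whose endpoints lies on the unique path in $G$ from $r$ to the other endpoint; $L_{\mathrm{up}}$ is the set of up-links. A link set $C\subseteq L$ is $k$-thin if every vertex $v\in V$ lies in $V_\ell$ for at most $k$ links $\ell\in C$. *)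

theory Defs
  imports Complex_Main "HOL-Library.Disjoint_Sets"
begin

definition is_path :: "'a set set \<Rightarrow> 'a list \<Rightarrow> 'a \<Rightarrow> 'a \<Rightarrow> bool" where
  "is_path E p u v \<longleftrightarrow> p \<noteq> [] \<and> hd p = u \<and> last p = v \<and> distinct p \<and>
     (\<forall>i. Suc i < length p \<longrightarrow> {p ! i, p ! Suc i} \<in> E)"

definition is_tree :: "'a set \<Rightarrow> 'a set set \<Rightarrow> bool" where
  "is_tree V E \<longleftrightarrow> finite V \<and> V \<noteq> {} \<and>
     E \<subseteq> {{a, b} | a b. a \<in> V \<and> b \<in> V \<and> a \<noteq> b} \<and>
     (\<forall>u\<in>V. \<forall>v\<in>V. \<exists>!p. is_path E p u v)"

definition tree_path :: "'a set set \<Rightarrow> 'a \<Rightarrow> 'a \<Rightarrow> 'a list" where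
  "tree_path E u v = (THE p. is_path E p u v)"

definition path_edges :: "'a list \<Rightarrow> 'a set set" where
  "path_edges p = {{p ! i, p ! Suc i} | i. Suc i < length p}"

definition link_edges :: "'a set set \<Rightarrow> 'a set \<Rightarrow> 'a set set" where
  "link_edges E l = \<Union>{path_edges (tree_path E a b) | a b. l = {a, b}}"

definition link_verts :: "'a set set \<Rightarrow> 'a set \<Rightarrow> 'a set" where
  "link_verts E l = \<Union>{set (tree_path E a b) | a b. l = {a, b}}"

definition is_up_link :: "'a set set \<Rightarrow> 'a \<Rightarrow> 'a set \<Rightarrow> bool" where
  "is_up_link E r l \<longleftrightarrow> (\<exists>a b. l = {a, b} \<and> a \<in> set (tree_path E r b))"

definition k_thin :: "'a set \<Rightarrow> 'a set set \<Rightarrow> nat \<Rightarrow> 'a set set \<Rightarrow> bool" where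
  "k_thin V E k C \<longleftrightarrow> (\<forall>v\<in>V. card {l \<in> C. v \<in> link_verts E l} \<le> k)"

definition wtap_instance :: "'a set \<Rightarrow> 'a set set \<Rightarrow> 'a set set \<Rightarrow> ('a set \<Rightarrow> real) \<Rightarrow> bool" where
  "wtap_instance V E L w \<longleftrightarrow> is_tree V E \<and>
     L \<subseteq> {{a, b} | a b. a \<in> V \<and> b \<in> V \<and> a \<noteq> b} \<and> (\<forall>l\<in>L. w l > 0)"

definition wtap_solution :: "'a set set \<Rightarrow> 'a set set \<Rightarrow> 'a set set \<Rightarrow> bool" where
  "wtap_solution E L F \<longleftrightarrow> F \<subseteq> L \<and> (\<Union>l\<in>F. link_edges E l) = E"

end

theory Submission
  imports Defs
begin

text \<open>Root the tree at \<open>r\<close> and represent every edge by its lower endpoint. The links of \<open>F\<close> meet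
  the path \<open>P\<^sub>u\<close> of an up-link \<open>u\<close> in intervals, so \<open>u\<close> has a minimum cover by links of \<open>F\<close>,
  and a minimum interval cover has ply at most two. Apart from its top link, every link of the
  cover of \<open>u\<close> has its apex on \<open>P\<^sub>u\<close>; as the paths \<open>P\<^sub>u\<close> are edge-disjoint, each link of \<open>F\<close>
  is such an inner link of at most one up-link, its owner. Letting the owner of the top link of
  \<open>u\<close> be the parent of \<open>u\<close> organises the up-links not covered by a single link into a forest.
  With \<open>k = \<lceil>1/\<epsilon>\<rceil>\<close>, remove the up-links whose level in this forest lies in the lightest residue
  class modulo \<open>k\<close>, of weight at most \<open>\<epsilon> w(U)\<close>. Merging the cover of every remaining up-link
  into the class of its top link gives a partition of \<open>F\<close> covering all remaining up-links. At
  any vertex, the up-links whose inner links of one class pass through it form a chain in the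
  forest with at most \<open>k - 1\<close> consecutive levels; the topmost of them and the root link of the class
  contribute at most two links through the vertex and every other one at most one, so every
  class is \<open>k\<close>-thin.\<close>

section \<open>Paths\<close>

lemma is_path_take:
  assumes "is_path E p u v" "i < length p"
  shows "is_path E (take (Suc i) p) u (p ! i)"
proof -
  have "last (take (Suc i) p) = p ! i"
    using assms(2) by (simp add: take_Suc_conv_app_nth)
  then show ?thesis using assms unfolding is_path_def by (auto simp: hd_take)
qed

lemma is_path_drop: "is_path E p u v \<Longrightarrow> i < length p \<Longrightarrow> is_path E (drop i p) (p ! i) v"
  unfolding is_path_def by (auto simp: hd_drop_conv_nth)

lemma is_path_rev: "is_path E p u v \<Longrightarrow> is_path E (rev p) v u"
  unfolding is_path_def
proof (intro conjI allI impI)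
  assume p: "p \<noteq> [] \<and> hd p = u \<and> last p = v \<and> distinct p \<and>
    (\<forall>i. Suc i < length p \<longrightarrow> {p ! i, p ! Suc i} \<in> E)"
  then show "rev p \<noteq> []" "hd (rev p) = v" "last (rev p) = u" "distinct (rev p)"
    by (auto simp: hd_rev last_rev)
  fix i assume i: "Suc i < length (rev p)"
  have "{p ! (length p - Suc (Suc i)), p ! Suc (length p - Suc (Suc i))} \<in> E"
    using p i by simp
  moreover have "Suc (length p - Suc (Suc i)) = length p - Suc i" using i by simp
  ultimately show "{rev p ! i, rev p ! Suc i} \<in> E"
    using i by (simp add: rev_nth insert_commute)
qed

lemma nth_append_tl_last:
  assumes "p \<noteq> []" "q \<noteq> []" "last p = hd q" "length p \<le> Suc i"
  shows "(p @ tl q) ! i = q ! (Suc i - length p)"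
proof (cases "Suc i = length p")
  case True
  then have "i = length p - 1" by simp
  then show ?thesis using assms True by (simp add: nth_append last_conv_nth hd_conv_nth)
next
  case False
  have "q ! Suc n = tl q ! n" for n using \<open>q \<noteq> []\<close> by (cases q) auto
  then show ?thesis using assms False by (simp add: nth_append Suc_diff_le)
qed

lemma is_path_append:
  assumes p: "is_path E p u w" and q: "is_path E q w v" and common: "set p \<inter> set q = {w}"
  shows "is_path E (p @ tl q) u v"
proof -
  have ne: "p \<noteq> []" "q \<noteq> []" and join: "last p = hd q"
    and ep: "\<And>i. Suc i < length p \<Longrightarrow> {p ! i, p ! Suc i} \<in> E"
    and eq: "\<And>i. Suc i < length q \<Longrightarrow> {q ! i, q ! Suc i} \<in> E"
    using p q by (auto simp: is_path_def)
  obtain q' where q': "q = w # q'" using q by (cases q) (auto simp: is_path_def)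
  have "distinct (p @ tl q)" using p q common q' unfolding is_path_def by auto
  moreover have "{(p @ tl q) ! i, (p @ tl q) ! Suc i} \<in> E" if i: "Suc i < length (p @ tl q)" for i
  proof (cases "Suc i < length p")
    case True
    then show ?thesis using ep by (simp add: nth_append)
  next
    case False
    then have "(p @ tl q) ! i = q ! (Suc i - length p)"
      "(p @ tl q) ! Suc i = q ! Suc (Suc i - length p)"
      using nth_append_tl_last[OF ne join] by (simp_all add: Suc_diff_le)
    moreover have "Suc (Suc i - length p) < length q" using i False ne by auto
    ultimately show ?thesis using eq by simp
  qed
  moreover have "last (p @ tl q) = v"
    using p q q' by (cases q') (auto simp: is_path_def)
  ultimately show ?thesis using p unfolding is_path_def by simp
qed

lemma is_path_singleton: "is_path E [u] u u"
  unfolding is_path_def by simp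

lemma is_path_edge: "{x, y} \<in> E \<Longrightarrow> x \<noteq> y \<Longrightarrow> is_path E [x, y] x y"
  unfolding is_path_def by (auto simp: less_Suc_eq)

section \<open>Rooted trees\<close>

locale rooted_tree =
  fixes V :: "'a set" and E :: "'a set set" and r :: 'a
  assumes tree: "is_tree V E" and root_in_V: "r \<in> V"
begin

lemma finite_V: "finite V"
  using tree unfolding is_tree_def by auto

lemma E_subset: "E \<subseteq> {{a, b} | a b. a \<in> V \<and> b \<in> V \<and> a \<noteq> b}"
  using tree unfolding is_tree_def by auto

lemma unique_path: "u \<in> V \<Longrightarrow> v \<in> V \<Longrightarrow> \<exists>!p. is_path E p u v"
  using tree unfolding is_tree_def by auto

lemma tree_path_is_path: "u \<in> V \<Longrightarrow> v \<in> V \<Longrightarrow> is_path E (tree_path E u v) u v"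
  unfolding tree_path_def by (rule theI') (rule unique_path)

lemma tree_path_unique: "is_path E p u v \<Longrightarrow> u \<in> V \<Longrightarrow> v \<in> V \<Longrightarrow> tree_path E u v = p"
  using unique_path tree_path_is_path by blast

lemma edge_ends: "{x, y} \<in> E \<Longrightarrow> x \<in> V \<and> y \<in> V \<and> x \<noteq> y"
  using E_subset by (auto simp: doubleton_eq_iff)

lemma path_in_V: assumes "is_path E p u v" "u \<in> V" shows "set p \<subseteq> V"
proof
  fix x assume "x \<in> set p"
  then obtain i where i: "i < length p" "x = p ! i" by (auto simp: in_set_conv_nth)
  show "x \<in> V"
  proof (cases i)
    case 0 then show ?thesis using assms i by (auto simp: is_path_def hd_conv_nth)
  next
    case (Suc j)
    then have "{p ! j, p ! Suc j} \<in> E" using assms i unfolding is_path_def by auto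
    then show ?thesis using edge_ends i Suc by auto
  qed
qed

lemma path_edge_consecutive:
  assumes p: "is_path E p u v" and ij: "i < j" "j < length p" and e: "{p ! i, p ! j} \<in> E"
  shows "j = Suc i"
proof -
  have ne: "p ! i \<noteq> p ! j" using edge_ends[OF e] by simp
  have "is_path E (take (Suc j) p) u (p ! j)" using is_path_take[OF p ij(2)] .
  from is_path_drop[OF this, of i] ij
  have sp: "is_path E (drop i (take (Suc j) p)) (p ! i) (p ! j)" by simp
  have xV: "p ! i \<in> V" "p ! j \<in> V" using edge_ends[OF e] by auto
  have "tree_path E (p ! i) (p ! j) = drop i (take (Suc j) p)" using tree_path_unique[OF sp xV] .
  moreover have "tree_path E (p ! i) (p ! j) = [p ! i, p ! j]"
    using tree_path_unique[OF is_path_edge[OF e ne] xV] .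
  ultimately have eq: "drop i (take (Suc j) p) = [p ! i, p ! j]" by simp
  have "length (drop i (take (Suc j) p)) = 2" by (simp only: eq) simp
  then show ?thesis using ij by simp
qed

definition root_path where "root_path x = tree_path E r x"
definition depth where "depth x = length (root_path x) - 1"
definition ancestor where "ancestor x y \<longleftrightarrow> y \<in> V \<and> x \<in> set (root_path y)"

lemma root_path_is_path: "x \<in> V \<Longrightarrow> is_path E (root_path x) r x"
  unfolding root_path_def using tree_path_is_path root_in_V by blast

lemma root_path_props: assumes "x \<in> V"
  shows "root_path x \<noteq> []" "hd (root_path x) = r" "last (root_path x) = x" "distinct (root_path x)"
    "length (root_path x) = Suc (depth x)"
  using root_path_is_path[OF assms] unfolding is_path_def depth_def by auto

lemma root_path_in_V: "x \<in> V \<Longrightarrow> set (root_path x) \<subseteq> V"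
  using path_in_V root_path_is_path root_in_V by blast

lemma root_path_nth_depth: "x \<in> V \<Longrightarrow> root_path x ! depth x = x"
  using root_path_props[of x] by (simp add: last_conv_nth)

lemma root_path_nth: assumes "x \<in> V" "i \<le> depth x"
  shows "root_path (root_path x ! i) = take (Suc i) (root_path x)"
proof -
  have i: "i < length (root_path x)" using assms root_path_props by simp
  have "root_path x ! i \<in> V" using root_path_in_V[OF assms(1)] i by auto
  moreover have "is_path E (take (Suc i) (root_path x)) r (root_path x ! i)"
    using is_path_take[OF root_path_is_path[OF assms(1)] i] .
  ultimately show ?thesis using tree_path_unique root_in_V unfolding root_path_def by blast
qed

lemma depth_root_path_nth: assumes "x \<in> V" "i \<le> depth x" shows "depth (root_path x ! i) = i"
  using root_path_nth[OF assms] root_path_props(5)[OF assms(1)] assms(2) unfolding depth_def by simp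

lemma ancestor_iff: "ancestor y x \<longleftrightarrow> x \<in> V \<and> depth y \<le> depth x \<and> root_path x ! depth y = y"
proof
  assume a: "ancestor y x"
  then have xV: "x \<in> V" unfolding ancestor_def by simp
  from a obtain i where i: "i < length (root_path x)" "y = root_path x ! i"
    unfolding ancestor_def by (auto simp: in_set_conv_nth)
  then have "i \<le> depth x" using root_path_props[OF xV] by simp
  then have "depth y = i" using depth_root_path_nth[OF xV] i by simp
  then show "x \<in> V \<and> depth y \<le> depth x \<and> root_path x ! depth y = y"
    using xV i root_path_props[OF xV] by simp
next
  assume a: "x \<in> V \<and> depth y \<le> depth x \<and> root_path x ! depth y = y"
  then have "depth y < length (root_path x)" using root_path_props by simp
  then show "ancestor y x" using a unfolding ancestor_def by (metis nth_mem)
qed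

lemma ancestor_in_V: "ancestor y x \<Longrightarrow> y \<in> V \<and> x \<in> V"
  unfolding ancestor_def using root_path_in_V by blast

lemma ancestor_refl: "x \<in> V \<Longrightarrow> ancestor x x"
  unfolding ancestor_def using root_path_props(1,3) last_in_set by metis

lemma ancestor_depth_le: "ancestor x y \<Longrightarrow> depth x \<le> depth y" by (simp add: ancestor_iff)

lemma ancestor_depth_eq: "ancestor x y \<Longrightarrow> depth x = depth y \<Longrightarrow> x = y"
  using ancestor_iff root_path_nth_depth by metis

lemma ancestor_depth_less: "ancestor x y \<Longrightarrow> x \<noteq> y \<Longrightarrow> depth x < depth y"
  using ancestor_depth_le ancestor_depth_eq le_neq_implies_less by blast

lemma ancestor_antisym: "ancestor x y \<Longrightarrow> ancestor y x \<Longrightarrow> x = y"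
  using ancestor_depth_le ancestor_depth_eq le_antisym by metis

lemma ancestor_trans: assumes "ancestor x y" "ancestor y z" shows "ancestor x z"
proof -
  have zV: "z \<in> V" and yz: "depth y \<le> depth z" "root_path z ! depth y = y"
    using assms(2) ancestor_iff by auto
  have "root_path y = take (Suc (depth y)) (root_path z)"
    using root_path_nth[OF zV yz(1)] yz(2) by simp
  then have "set (root_path y) \<subseteq> set (root_path z)" by (metis set_take_subset)
  then show ?thesis using assms(1) zV unfolding ancestor_def by auto
qed

lemma ancestor_by_depth: assumes "ancestor x z" "ancestor y z"
  "depth x \<le> depth y" shows "ancestor x y"
proof -
  have zV: "z \<in> V" using assms ancestor_in_V by auto
  have yz: "depth y \<le> depth z" "root_path z ! depth y = y" using assms(2) ancestor_iff by auto
  have xz: "root_path z ! depth x = x" using assms(1) ancestor_iff by auto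
  have "root_path y = take (Suc (depth y)) (root_path z)"
    using root_path_nth[OF zV yz(1)] yz(2) by simp
  then have "root_path y ! depth x = x" using assms(3) xz by simp
  moreover have "y \<in> V" using ancestor_in_V assms(2) by auto
  ultimately show ?thesis using assms(3) ancestor_iff by auto
qed

lemma root_ancestor: "x \<in> V \<Longrightarrow> ancestor r x"
  unfolding ancestor_def using root_path_props(1,2) hd_in_set by metis

lemma depth_root: "depth r = 0"
proof -
  have "tree_path E r r = [r]" using tree_path_unique[OF is_path_singleton root_in_V root_in_V] .
  then show ?thesis unfolding depth_def root_path_def by simp
qed

lemma depth_eq_0_root: assumes "x \<in> V" "depth x = 0" shows "x = r"
  using ancestor_depth_eq[OF root_ancestor[OF assms(1)]] assms depth_root by simp

definition parent where "parent x = root_path x ! (depth x - 1)"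

lemma parent_props: assumes "x \<in> V" "x \<noteq> r"
  shows "ancestor (parent x) x" "depth (parent x) = depth x - 1" "0 < depth x" "{parent x, x} \<in> E"
    "parent x \<noteq> x" "\<And>w. ancestor w x \<Longrightarrow> w \<noteq> x \<Longrightarrow> ancestor w (parent x)"
proof -
  show d: "0 < depth x" using depth_eq_0_root assms by auto
  show dp: "depth (parent x) = depth x - 1" unfolding parent_def
    using depth_root_path_nth[OF assms(1)] by simp
  show a: "ancestor (parent x) x" using ancestor_iff assms(1) dp unfolding parent_def by simp
  show "parent x \<noteq> x" using dp d by auto
  have "Suc (depth x - 1) < length (root_path x)" using d root_path_props(5)[OF assms(1)] by simp
  then have "{root_path x ! (depth x - 1), root_path x ! Suc (depth x - 1)} \<in> E"
    using root_path_is_path[OF assms(1)] unfolding is_path_def by blast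
  then show "{parent x, x} \<in> E"
    using d root_path_nth_depth[OF assms(1)] unfolding parent_def by simp
  fix w assume "ancestor w x" "w \<noteq> x"
  then have "depth w < depth x" using ancestor_depth_le ancestor_depth_eq by fastforce
  then show "ancestor w (parent x)" using ancestor_by_depth[OF \<open>ancestor w x\<close> a] dp by simp
qed


lemma lca_exists: assumes "a \<in> V" "b \<in> V"
  shows "\<exists>l. ancestor l a \<and> ancestor l b \<and> (\<forall>x. ancestor x a \<and> ancestor x b \<longrightarrow> ancestor x l)"
proof -
  let ?C = "{x. ancestor x a \<and> ancestor x b}"
  have fin: "finite ?C" using finite_V ancestor_in_V by (auto intro: finite_subset)
  have ne: "r \<in> ?C" using root_ancestor assms by auto
  let ?m = "Max (depth ` ?C)"
  have "?m \<in> depth ` ?C" using fin ne by (intro Max_in) auto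
  then obtain l where l1: "l \<in> ?C" "depth l = ?m" by auto
  have "\<forall>x\<in>?C. depth x \<le> depth l" using l1 fin by auto
  note l = l1(1) this
  show ?thesis using l ancestor_by_depth by blast
qed

definition lca where
  "lca a b = (SOME l. ancestor l a \<and> ancestor l b \<and>
    (\<forall>x. ancestor x a \<and> ancestor x b \<longrightarrow> ancestor x l))"

lemma lca_props: assumes "a \<in> V" "b \<in> V"
  shows "ancestor (lca a b) a" "ancestor (lca a b) b"
    "\<And>x. ancestor x a \<Longrightarrow> ancestor x b \<Longrightarrow> ancestor x (lca a b)"
  using someI_ex[OF lca_exists[OF assms]] unfolding lca_def by blast+

lemma lca_unique: assumes "a \<in> V" "b \<in> V" "ancestor l a" "ancestor l b"
  "\<And>x. ancestor x a \<Longrightarrow> ancestor x b \<Longrightarrow> ancestor x l"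
  shows "lca a b = l"
  using lca_props[OF assms(1,2)] assms(3-5) ancestor_antisym by metis

lemma lca_comm: "a \<in> V \<Longrightarrow> b \<in> V \<Longrightarrow> lca a b = lca b a"
  using lca_unique lca_props by metis

lemma lca_ancestor: "a \<in> V \<Longrightarrow> ancestor a b \<Longrightarrow> lca a b = a"
  using lca_unique ancestor_refl ancestor_in_V by metis

lemma set_drop_root_path: assumes "a \<in> V"
  shows "set (drop d (root_path a)) = {x. ancestor x a \<and> d \<le> depth x}"
proof
  show "set (drop d (root_path a)) \<subseteq> {x. ancestor x a \<and> d \<le> depth x}"
  proof
    fix x assume "x \<in> set (drop d (root_path a))"
    then obtain i where i: "i < length (root_path a) - d" "x = drop d (root_path a) ! i"
      by (auto simp: in_set_conv_nth)
    then have x: "x = root_path a ! (d + i)" "d + i < length (root_path a)" by auto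
    then have "ancestor x a" unfolding ancestor_def using assms by auto
    moreover have "depth x = d + i"
      using x depth_root_path_nth[OF assms] root_path_props(5)[OF assms] by simp
    ultimately show "x \<in> {x. ancestor x a \<and> d \<le> depth x}" by simp
  qed
next
  show "{x. ancestor x a \<and> d \<le> depth x} \<subseteq> set (drop d (root_path a))"
  proof
    fix x assume x: "x \<in> {x. ancestor x a \<and> d \<le> depth x}"
    then have "root_path a ! depth x = x" "depth x \<le> depth a" using ancestor_iff by auto
    then have "x = drop d (root_path a) ! (depth x - d)"
      "depth x - d < length (drop d (root_path a))"
      using x root_path_props(5)[OF assms] by auto
    then show "x \<in> set (drop d (root_path a))" by (metis nth_mem)
  qed
qed

lemma root_path_suffixes_meet:
  assumes aV: "a \<in> V" and bV: "b \<in> V"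
  defines "d \<equiv> depth (lca a b)"
  shows "set (drop d (root_path a)) \<inter> set (drop d (root_path b)) = {lca a b}"
proof -
  have la: "ancestor (lca a b) a" and lb: "ancestor (lca a b) b" using lca_props[OF aV bV] by auto
  have "x = lca a b" if x: "ancestor x a" "ancestor x b" "d \<le> depth x" for x
    using lca_props(3)[OF aV bV x(1,2)] x(3) ancestor_depth_le ancestor_depth_eq d_def
    by (metis le_antisym)
  then show ?thesis using set_drop_root_path[OF aV] set_drop_root_path[OF bV] la lb d_def by auto
qed

lemma tree_path_via_lca: assumes aV: "a \<in> V" and bV: "b \<in> V"
  defines "l \<equiv> lca a b"
  shows "tree_path E a b = rev (drop (depth l) (root_path a)) @ tl (drop (depth l) (root_path b))"
    "set (tree_path E a b) = {x. ancestor l x \<and> (ancestor x a \<or> ancestor x b)}"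
proof -
  let ?d = "depth l"
  have la: "ancestor l a" and lb: "ancestor l b" using lca_props[OF aV bV] l_def by auto
  have dla: "?d < length (root_path a)"
    using ancestor_depth_le[OF la] root_path_props(5)[OF aV] by simp
  have dlb: "?d < length (root_path b)"
    using ancestor_depth_le[OF lb] root_path_props(5)[OF bV] by simp
  have pa: "is_path E (drop ?d (root_path a)) l a"
    using is_path_drop[OF root_path_is_path[OF aV] dla] la ancestor_iff by simp
  have pb: "is_path E (drop ?d (root_path b)) l b"
    using is_path_drop[OF root_path_is_path[OF bV] dlb] lb ancestor_iff by simp
  have sa: "set (drop ?d (root_path a)) = {x. ancestor x a \<and> ?d \<le> depth x}"
    using set_drop_root_path[OF aV] .
  have sb: "set (drop ?d (root_path b)) = {x. ancestor x b \<and> ?d \<le> depth x}"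
    using set_drop_root_path[OF bV] .
  have int: "set (rev (drop ?d (root_path a))) \<inter> set (drop ?d (root_path b)) = {l}"
    using root_path_suffixes_meet[OF aV bV] l_def by simp
  have p: "is_path E (rev (drop ?d (root_path a)) @ tl (drop ?d (root_path b))) a b"
    using is_path_append[OF is_path_rev[OF pa] pb int] .
  show "tree_path E a b = rev (drop ?d (root_path a)) @ tl (drop ?d (root_path b))"
    using tree_path_unique[OF p aV bV] .
  have hb: "drop ?d (root_path b) = l # tl (drop ?d (root_path b))"
    using pb unfolding is_path_def by (metis list.collapse)
  have "set (drop ?d (root_path b)) = insert l (set (tl (drop ?d (root_path b))))"
    by (subst hb) simp
  moreover have "l \<in> set (drop ?d (root_path a))" using sa la by simp
  ultimately have "set (tree_path E a b) =
    set (drop ?d (root_path a)) \<union> set (drop ?d (root_path b))"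
    using tree_path_unique[OF p aV bV] by auto
  also have "\<dots> = {x. ancestor l x \<and> (ancestor x a \<or> ancestor x b)}"
    using sa sb la lb ancestor_by_depth ancestor_depth_le by blast
  finally show "set (tree_path E a b) = {x. ancestor l x \<and> (ancestor x a \<or> ancestor x b)}" .
qed

lemma edge_parent: assumes e: "{x, y} \<in> E"
  shows "(x \<noteq> r \<and> y = parent x) \<or> (y \<noteq> r \<and> x = parent y)"
proof -
  have xV: "x \<in> V" and yV: "y \<in> V" and ne: "x \<noteq> y" using edge_ends[OF e] by auto
  define l where "l = lca x y"
  have lx: "ancestor l x" and ly: "ancestor l y" using lca_props[OF xV yV] l_def by auto
  txt \<open>The path \<open>[x, y]\<close> goes up from \<open>x\<close> to \<open>l\<close> and down to \<open>y\<close>, so one endpoint is \<open>l\<close>.\<close>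
  have t1: "tree_path E x y = [x, y]" using tree_path_unique[OF is_path_edge[OF e ne] xV yV] .
  have t2: "tree_path E x y =
    rev (drop (depth l) (root_path x)) @ tl (drop (depth l) (root_path y))"
    unfolding l_def by (rule tree_path_via_lca(1)[OF xV yV])
  have "length (rev (drop (depth l) (root_path x)) @ tl (drop (depth l) (root_path y))) =
    length [x,y]"
    using t1 t2 by (simp only:)
  then have len: "(Suc (depth x) - depth l) + (Suc (depth y) - depth l - 1) = 2"
    by (simp only: length_append length_rev length_tl length_drop root_path_props(5)[OF xV]
      root_path_props(5)[OF yV]) simp
  have dx: "depth l \<le> depth x" and dy: "depth l \<le> depth y" using ancestor_depth_le lx ly by auto
  show ?thesis
  proof (cases "depth x = depth l")
    case True
    have xl: "l = x" by (rule ancestor_depth_eq[OF lx]) (use True in simp)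
    have dyl: "depth y = Suc (depth l)" using len True dy by linarith
    have yr: "y \<noteq> r" using dyl depth_root by auto
    have "depth (parent y) = depth l" using parent_props(2)[OF yV yr] dyl by simp
    moreover have "ancestor l (parent y)" using parent_props(6)[OF yV yr ly] xl ne by blast
    ultimately have "l = parent y" using ancestor_depth_eq[of l "parent y"] by metis
    then show ?thesis using yr xl by blast
  next
    case False
    then have dxl: "depth x = Suc (depth l)" "depth y = depth l" using len dx dy by linarith+
    have yl: "l = y" by (rule ancestor_depth_eq[OF ly]) (use dxl in simp)
    have xr: "x \<noteq> r" using dxl depth_root by auto
    have "depth (parent x) = depth l" using parent_props(2)[OF xV xr] dxl by simp
    moreover have "ancestor l (parent x)" using parent_props(6)[OF xV xr lx] yl ne by blast
    ultimately have "l = parent x" using ancestor_depth_eq[of l "parent x"] by metis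
    then show ?thesis using xr yl by blast
  qed
qed

lemma parent_edge_inj: assumes "x \<in> V" "x \<noteq> r" "y \<in> V" "y \<noteq> r" "{parent x, x} = {parent y, y}"
  shows "x = y"
proof -
  have "x = y \<or> (x = parent y \<and> y = parent x)" using assms(5) by (auto simp: doubleton_eq_iff)
  moreover have "depth (parent x) < depth x" using parent_props(2,3)[OF assms(1,2)] by simp
  moreover have "depth (parent y) < depth y" using parent_props(2,3)[OF assms(3,4)] by simp
  ultimately show ?thesis by auto
qed

lemma path_edge_is_parent_edge:
  assumes aV: "a \<in> V" and bV: "b \<in> V" and i: "Suc i < length (tree_path E a b)"
  defines "p \<equiv> tree_path E a b"
  shows "\<exists>z. {p ! i, p ! Suc i} = {parent z, z} \<and> z \<in> set p \<and> z \<noteq> lca a b"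
proof -
  have path: "is_path E p a b" using tree_path_is_path aV bV p_def by simp
  have S: "set p = {x. ancestor (lca a b) x \<and> (ancestor x a \<or> ancestor x b)}"
    using tree_path_via_lca(2)[OF aV bV] p_def by simp
  have mem: "p ! i \<in> set p" "p ! Suc i \<in> set p" using i p_def by auto
  have not_lca: "z \<noteq> lca a b" if z: "z \<in> set p" "z \<noteq> r" "parent z \<in> set p" for z
  proof
    assume "z = lca a b"
    then have "depth z \<le> depth (parent z)" using S z ancestor_depth_le by simp
    moreover have "z \<in> V" using path_in_V[OF path aV] z by auto
    ultimately show False using parent_props(2,3) z(2) by fastforce
  qed
  have "{p ! i, p ! Suc i} \<in> E" using path i p_def unfolding is_path_def by auto
  from edge_parent[OF this] show ?thesis
  proof
    assume "p ! i \<noteq> r \<and> p ! Suc i = parent (p ! i)"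
    then show ?thesis using mem not_lca[of "p ! i"] by (auto simp: insert_commute)
  next
    assume "p ! Suc i \<noteq> r \<and> p ! i = parent (p ! Suc i)"
    then show ?thesis using mem not_lca[of "p ! Suc i"] by auto
  qed
qed

lemma parent_edge_in_path_edges:
  assumes aV: "a \<in> V" and bV: "b \<in> V" and z: "z \<in> set (tree_path E a b)" "z \<noteq> lca a b"
  shows "{parent z, z} \<in> path_edges (tree_path E a b)"
proof -
  let ?p = "tree_path E a b" and ?l = "lca a b"
  have p: "is_path E ?p a b" using tree_path_is_path aV bV by simp
  have S: "set ?p = {x. ancestor ?l x \<and> (ancestor x a \<or> ancestor x b)}"
    using tree_path_via_lca(2)[OF aV bV] by simp
  have zV: "z \<in> V" using path_in_V[OF p aV] z by auto
  have lz: "ancestor ?l z" using S z by auto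
  have zr: "z \<noteq> r"
  proof
    assume "z = r"
    then have "?l = r" using ancestor_depth_le[OF lz] depth_root depth_eq_0_root lz ancestor_in_V
      by (metis le_zero_eq)
    then show False using z \<open>z = r\<close> by simp
  qed
  have "ancestor ?l (parent z)" using parent_props(6)[OF zV zr lz] z(2) by simp
  moreover have "ancestor (parent z) a \<or> ancestor (parent z) b"
    using S z parent_props(1)[OF zV zr] ancestor_trans by blast
  ultimately have "parent z \<in> set ?p" using S by simp
  then obtain i where i: "i < length ?p" "?p ! i = parent z" by (auto simp: in_set_conv_nth)
  obtain j where j: "j < length ?p" "?p ! j = z" using z(1) by (auto simp: in_set_conv_nth)
  have e: "{parent z, z} \<in> E" using parent_props(4)[OF zV zr] .
  have "i \<noteq> j" using i j parent_props(5)[OF zV zr] by auto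
  then consider "i < j" | "j < i" by linarith
  then show ?thesis
  proof cases
    case 1
    then have "j = Suc i" using path_edge_consecutive[OF p _ j(1)] e i j by simp
    then have "{parent z, z} = {?p ! i, ?p ! Suc i}" "Suc i < length ?p" using i j by auto
    then show ?thesis unfolding path_edges_def by blast
  next
    case 2
    then have "i = Suc j"
      using path_edge_consecutive[OF p _ i(1)] e i j by (simp add: insert_commute)
    then have "{parent z, z} = {?p ! j, ?p ! Suc j}" "Suc j < length ?p" using i j by auto
    then show ?thesis unfolding path_edges_def by blast
  qed
qed

lemma path_edges_tree_path:
  assumes "a \<in> V" "b \<in> V"
  shows "path_edges (tree_path E a b) =
    {{parent z, z} | z. z \<in> set (tree_path E a b) \<and> z \<noteq> lca a b}"
  using path_edge_is_parent_edge[OF assms] parent_edge_in_path_edges[OF assms]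
  unfolding path_edges_def by blast

lemma Union_doubleton_sym:
  assumes "f b a = f a b"
  shows "\<Union>{f a' b' | a' b'. {a, b} = {a', b'}} = f a b"
  using assms by (auto simp: doubleton_eq_iff)

lemma link_verts_char:
  assumes aV: "a \<in> V" and bV: "b \<in> V"
  shows "link_verts E {a, b} = {x. ancestor (lca a b) x \<and> (ancestor x a \<or> ancestor x b)}"
proof -
  have "set (tree_path E b a) = set (tree_path E a b)"
    using tree_path_via_lca(2)[OF aV bV] tree_path_via_lca(2)[OF bV aV] lca_comm[OF aV bV] by auto
  from Union_doubleton_sym[where f = "\<lambda>x y. set (tree_path E x y)", OF this]
  show ?thesis unfolding link_verts_def using tree_path_via_lca(2)[OF aV bV] by simp
qed

lemma link_edges_char:
  assumes aV: "a \<in> V" and bV: "b \<in> V"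
  shows "link_edges E {a, b} = {{parent z, z} | z.
    z \<in> {x. ancestor (lca a b) x \<and> (ancestor x a \<or> ancestor x b)} \<and> z \<noteq> lca a b}"
proof -
  have "path_edges (tree_path E b a) = path_edges (tree_path E a b)"
    using path_edges_tree_path[OF aV bV] path_edges_tree_path[OF bV aV]
      tree_path_via_lca(2)[OF aV bV] tree_path_via_lca(2)[OF bV aV] lca_comm[OF aV bV] by auto
  from Union_doubleton_sym[where f = "\<lambda>x y. path_edges (tree_path E x y)", OF this]
  show ?thesis unfolding link_edges_def
    using path_edges_tree_path[OF aV bV] tree_path_via_lca(2)[OF aV bV] by simp
qed

end

section \<open>Links in a rooted tree\<close>

locale wtap_setting = rooted_tree V E r for V :: "'a set" and E r +
  fixes L :: "'a set set" and w :: "'a set \<Rightarrow> real" and F U :: "'a set set"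
  assumes wtap: "wtap_instance V E L w" and solution: "wtap_solution E L F" and U_subset_L: "U \<subseteq> L"
    and U_up: "\<forall>u\<in>U. is_up_link E r u"
    and U_disjoint: "\<forall>u\<in>U. \<forall>u'\<in>U. u \<noteq> u' \<longrightarrow> link_edges E u \<inter> link_edges E u' = {}"
begin

lemma L_subset: "L \<subseteq> {{a, b} | a b. a \<in> V \<and> b \<in> V \<and> a \<noteq> b}"
  using wtap unfolding wtap_instance_def by auto

lemma weight_pos: "l \<in> L \<Longrightarrow> w l > 0"
  using wtap unfolding wtap_instance_def by auto

lemma F_subset_L: "F \<subseteq> L"
  using solution unfolding wtap_solution_def by auto

lemma F_covers_E: "(\<Union>l\<in>F. link_edges E l) = E"
  using solution unfolding wtap_solution_def by auto

lemma finite_L: "finite L"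
proof -
  have "L \<subseteq> Pow V" using L_subset by auto
  then show ?thesis using finite_V finite_subset by (metis finite_Pow_iff)
qed

lemma finite_F: "finite F"
  using finite_L F_subset_L finite_subset by blast

lemma finite_U: "finite U"
  using finite_L U_subset_L finite_subset by blast

definition verts where "verts l = link_verts E l"

text \<open>An edge of the rooted tree is represented by its lower endpoint \<open>z\<close>, i.e. the edge
  \<open>{parent z, z}\<close>. The edges of \<open>P\<^sub>l\<close> are then represented by \<open>lower_ends l\<close>, the
  vertices of \<open>P\<^sub>l\<close> other than its apex.\<close>

definition ends where
  "ends l = (SOME p. l = {fst p, snd p} \<and> fst p \<in> V \<and> snd p \<in> V \<and> fst p \<noteq> snd p)"
definition apex where "apex l = lca (fst (ends l)) (snd (ends l))"
definition lower_ends where "lower_ends l = verts l - {apex l}"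

lemma ends_props: assumes "l \<in> L"
  shows "l = {fst (ends l), snd (ends l)}" "fst (ends l) \<in> V" "snd (ends l) \<in> V"
    "fst (ends l) \<noteq> snd (ends l)"
proof -
  have "\<exists>p. l = {fst p, snd p} \<and> fst p \<in> V \<and> snd p \<in> V \<and> fst p \<noteq> snd p"
    using assms L_subset by fastforce
  then have "l = {fst (ends l), snd (ends l)} \<and> fst (ends l) \<in> V \<and> snd (ends l) \<in> V \<and>
    fst (ends l) \<noteq> snd (ends l)"
    unfolding ends_def by (rule someI_ex)
  then show "l = {fst (ends l), snd (ends l)}" "fst (ends l) \<in> V" "snd (ends l) \<in> V"
    "fst (ends l) \<noteq> snd (ends l)" by auto
qed

lemma verts_char: assumes "l \<in> L"
  shows "verts l = {x. ancestor (apex l) x \<and>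
    (ancestor x (fst (ends l)) \<or> ancestor x (snd (ends l)))}"
  unfolding verts_def apex_def
  using link_verts_char[OF ends_props(2,3)[OF assms]] ends_props(1)[OF assms] by simp

lemma link_edges_lower_ends: assumes "l \<in> L"
  shows "link_edges E l = (\<lambda>z. {parent z, z}) ` lower_ends l"
proof -
  have "link_edges E l = {{parent z, z} | z. z \<in> verts l \<and> z \<noteq> apex l}"
    using link_edges_char[OF ends_props(2,3)[OF assms]] ends_props(1)[OF assms] verts_char[OF assms]
    unfolding apex_def by simp
  then show ?thesis unfolding lower_ends_def by auto
qed

lemma apex_ancestor: "l \<in> L \<Longrightarrow> x \<in> verts l \<Longrightarrow> ancestor (apex l) x" using verts_char by auto

lemma apex_in_verts: assumes "l \<in> L" shows "apex l \<in> verts l"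
proof -
  have "ancestor (apex l) (fst (ends l))" unfolding apex_def
    using lca_props(1) ends_props[OF assms] by simp
  then have "ancestor (apex l) (apex l)" using ancestor_in_V ancestor_refl by blast
  then show ?thesis using verts_char[OF assms] \<open>ancestor (apex l) (fst (ends l))\<close> by simp
qed

lemma verts_between:
  assumes "l \<in> L" "x \<in> verts l" "ancestor (apex l) y" "ancestor y x"
  shows "y \<in> verts l"
  using assms verts_char[OF assms(1)] ancestor_trans by auto

lemma verts_in_V: "l \<in> L \<Longrightarrow> verts l \<subseteq> V"
  using apex_ancestor ancestor_in_V by blast

lemma lower_ends_props: assumes "l \<in> L" "z \<in> lower_ends l" shows "z \<in> V" "z \<noteq> r"
proof -
  show "z \<in> V" using assms verts_in_V unfolding lower_ends_def by auto
  show "z \<noteq> r"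
  proof
    assume "z = r"
    have "ancestor (apex l) z" using apex_ancestor assms unfolding lower_ends_def by auto
    then have "depth (apex l) = 0" using \<open>z = r\<close> ancestor_depth_le depth_root by fastforce
    then have "apex l = r" using depth_eq_0_root ancestor_in_V \<open>ancestor (apex l) z\<close> by blast
    then show False using assms \<open>z = r\<close> unfolding lower_ends_def by simp
  qed
qed

definition up_ends where
  "up_ends u = (SOME p. u = {fst p, snd p} \<and> ancestor (fst p) (snd p) \<and> fst p \<noteq> snd p)"
definition up_top where "up_top u = fst (up_ends u)"
definition up_bot where "up_bot u = snd (up_ends u)"

lemma up_ends_props:
  assumes u: "u \<in> U"
  shows "u = {up_top u, up_bot u}" "ancestor (up_top u) (up_bot u)" "up_top u \<noteq> up_bot u"
proof -
  obtain a c where ac: "u = {a, c}" "a \<in> set (tree_path E r c)"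
    using U_up u unfolding is_up_link_def by auto
  have "u \<in> L" using u U_subset_L by auto
  then obtain x y where "u = {x, y}" "x \<in> V" "y \<in> V" "x \<noteq> y" using L_subset by auto
  then have "a \<noteq> c" "c \<in> V" using ac by (auto simp: doubleton_eq_iff)
  then have "ancestor a c" using ac unfolding ancestor_def root_path_def by simp
  then have "\<exists>p. u = {fst p, snd p} \<and> ancestor (fst p) (snd p) \<and> fst p \<noteq> snd p"
    using ac \<open>a \<noteq> c\<close> by auto
  then have "u = {fst (up_ends u), snd (up_ends u)} \<and>
      ancestor (fst (up_ends u)) (snd (up_ends u)) \<and> fst (up_ends u) \<noteq> snd (up_ends u)"
    unfolding up_ends_def by (rule someI_ex)
  then show "u = {up_top u, up_bot u}" "ancestor (up_top u) (up_bot u)" "up_top u \<noteq> up_bot u"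
    unfolding up_top_def up_bot_def by auto
qed

lemma U_in_L: "u \<in> U \<Longrightarrow> u \<in> L"
  using U_subset_L by auto

lemma apex_up: assumes u: "u \<in> U" shows "apex u = up_top u"
proof -
  have tV: "up_top u \<in> V" and bV: "up_bot u \<in> V" using ancestor_in_V up_ends_props[OF u] by auto
  have l1: "lca (up_top u) (up_bot u) = up_top u" using lca_ancestor[OF tV up_ends_props(2)[OF u]] .
  have "{fst (ends u), snd (ends u)} = {up_top u, up_bot u}"
    using ends_props(1)[OF U_in_L[OF u]] up_ends_props(1)[OF u] by simp
  then have "(fst (ends u) = up_top u \<and> snd (ends u) = up_bot u) \<or>
      (fst (ends u) = up_bot u \<and> snd (ends u) = up_top u)"
    by (auto simp: doubleton_eq_iff)
  then show ?thesis unfolding apex_def using l1 lca_comm[OF tV bV] by auto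
qed

lemma verts_up: assumes u: "u \<in> U"
  shows "verts u = {x. ancestor (up_top u) x \<and> ancestor x (up_bot u)}"
proof -
  have tV: "up_top u \<in> V" and bV: "up_bot u \<in> V" using ancestor_in_V up_ends_props[OF u] by auto
  have "verts u = {x. ancestor (lca (up_top u) (up_bot u)) x \<and>
      (ancestor x (up_top u) \<or> ancestor x (up_bot u))}"
    unfolding verts_def using link_verts_char[OF tV bV] up_ends_props(1)[OF u] by simp
  also have "\<dots> = {x. ancestor (up_top u) x \<and> ancestor x (up_bot u)}"
  proof -
    have "\<And>x. ancestor (up_top u) x \<Longrightarrow> ancestor x (up_top u) \<Longrightarrow> ancestor x (up_bot u)"
      using ancestor_trans up_ends_props(2)[OF u] by blast
    then show ?thesis using lca_ancestor[OF tV up_ends_props(2)[OF u]] by auto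
  qed
  finally show ?thesis .
qed

lemma lower_ends_up: assumes u: "u \<in> U"
  shows "lower_ends u = {x. ancestor (up_top u) x \<and> ancestor x (up_bot u) \<and> x \<noteq> up_top u}"
  using verts_up[OF u] apex_up[OF u] unfolding lower_ends_def by auto

lemma covered_iff_lower_ends: assumes u: "u \<in> U" and C: "C \<subseteq> L"
  shows "link_edges E u \<subseteq> (\<Union>l\<in>C. link_edges E l) \<longleftrightarrow> lower_ends u \<subseteq> (\<Union>l\<in>C. lower_ends l)"
proof
  assume h: "link_edges E u \<subseteq> (\<Union>l\<in>C. link_edges E l)"
  show "lower_ends u \<subseteq> (\<Union>l\<in>C. lower_ends l)"
  proof
    fix z assume z: "z \<in> lower_ends u"
    then have "{parent z, z} \<in> link_edges E u" using link_edges_lower_ends[OF U_in_L[OF u]] by auto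
    then obtain l z' where l: "l \<in> C" "z' \<in> lower_ends l" "{parent z, z} = {parent z', z'}"
      using h link_edges_lower_ends C by (auto simp: subset_iff)
    have "z = z'"
      using parent_edge_inj lower_ends_props[OF U_in_L[OF u] z] lower_ends_props l C by blast
    then show "z \<in> (\<Union>l\<in>C. lower_ends l)" using l by auto
  qed
next
  assume h: "lower_ends u \<subseteq> (\<Union>l\<in>C. lower_ends l)"
  show "link_edges E u \<subseteq> (\<Union>l\<in>C. link_edges E l)"
  proof
    fix e assume "e \<in> link_edges E u"
    then obtain z where z: "z \<in> lower_ends u" "e = {parent z, z}"
      using link_edges_lower_ends[OF U_in_L[OF u]] by auto
    then obtain l where l: "l \<in> C" "z \<in> lower_ends l" using h by auto
    then have "e \<in> link_edges E l" using link_edges_lower_ends[of l] C z by auto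
    then show "e \<in> (\<Union>l\<in>C. link_edges E l)" using l by auto
  qed
qed

lemma lower_ends_up_disjoint: assumes "u \<in> U" "u' \<in> U"
  "u \<noteq> u'" shows "lower_ends u \<inter> lower_ends u' = {}"
proof -
  have "link_edges E u \<inter> link_edges E u' = {}" using U_disjoint assms by auto
  then show ?thesis
    using link_edges_lower_ends U_in_L assms(1,2) by auto
qed

text \<open>Here \<open>P\<^sub>m\<close> and \<open>P\<^sub>c\<close> meet the root path of \<open>v\<close> in edge-disjoint segments, so one of
  them lies entirely above the other.\<close>

lemma up_links_disjoint_order:
  assumes m: "m \<in> U" and c: "c \<in> U" "c \<noteq> m"
    and q: "q \<in> lower_ends m" "ancestor q v" and p: "p \<in> lower_ends c" "ancestor p v"
    and mp: "ancestor (up_top m) p" "p \<noteq> up_top m"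
  shows "ancestor q (up_top c)"
proof -
  have q': "ancestor q (up_bot m)" using q(1) unfolding lower_ends_up[OF m] by auto
  have p': "ancestor (up_top c) p" "ancestor p (up_bot c)"
    using p(1) unfolding lower_ends_up[OF c(1)] by auto
  have disj: "x \<notin> lower_ends c" if "x \<in> lower_ends m" for x
    using lower_ends_up_disjoint[OF m c(1) c(2)[symmetric]] that by blast
  have "depth q < depth p"
  proof (rule ccontr)
    assume "\<not> depth q < depth p"
    then have "ancestor p q" using ancestor_by_depth[OF p(2) q(2)] by simp
    then have "p \<in> lower_ends m" unfolding lower_ends_up[OF m]
      using mp ancestor_trans[OF _ q'] by blast
    then show False using disj p(1) by blast
  qed
  then have qp: "ancestor q p" using ancestor_by_depth[OF q(2) p(2)] by simp
  have "depth q \<le> depth (up_top c)"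
  proof (rule ccontr)
    assume "\<not> ?thesis"
    then have "q \<in> lower_ends c"
      unfolding lower_ends_up[OF c(1)]
      using ancestor_by_depth[OF p'(1) qp] ancestor_trans[OF qp p'(2)] by auto
    then show False using disj q(1) by blast
  qed
  then show ?thesis using ancestor_by_depth[OF qp p'(1)] by simp
qed

lemma link_edges_subset_E: assumes "l \<in> L" shows "link_edges E l \<subseteq> E"
proof
  fix e assume "e \<in> link_edges E l"
  then obtain z where "z \<in> lower_ends l" "e = {parent z, z}"
    using link_edges_lower_ends[OF assms] by auto
  then show "e \<in> E" using parent_props(4) lower_ends_props[OF assms] by simp
qed

lemma F_covers_up: assumes u: "u \<in> U" shows "lower_ends u \<subseteq> (\<Union>l\<in>F. lower_ends l)"
proof -
  have "link_edges E u \<subseteq> (\<Union>l\<in>F. link_edges E l)"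
    using F_covers_E link_edges_subset_E[OF U_in_L[OF u]] by simp
  then show ?thesis using covered_iff_lower_ends[OF u F_subset_L] by simp
qed

end

section \<open>Minimum covers of a range by intervals\<close>

text \<open>Integers \<open>d \<in> {lo<..hi}\<close> stand for the unit steps \<open>[d - 1, d]\<close>; a family of intervals
  \<open>J l\<close> covers the range if every step lies inside one of its intervals.\<close>

definition convex_nat :: "nat set \<Rightarrow> bool" where
  "convex_nat X \<longleftrightarrow> (\<forall>x y z. x \<in> X \<longrightarrow> z \<in> X \<longrightarrow> x \<le> y \<longrightarrow> y \<le> z \<longrightarrow> y \<in> X)"

definition covers_step :: "('l \<Rightarrow> nat set) \<Rightarrow> 'l \<Rightarrow> nat \<Rightarrow> bool" where
  "covers_step J l d \<longleftrightarrow> d - 1 \<in> J l \<and> d \<in> J l"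

definition covers_range :: "('l \<Rightarrow> nat set) \<Rightarrow> nat \<Rightarrow> nat \<Rightarrow> 'l set \<Rightarrow> bool" where
  "covers_range J lo hi S \<longleftrightarrow> (\<forall>d. lo < d \<and> d \<le> hi \<longrightarrow> (\<exists>l\<in>S. covers_step J l d))"

lemma convex_natD: "convex_nat X \<Longrightarrow> x \<in> X \<Longrightarrow> z \<in> X \<Longrightarrow> x \<le> y \<Longrightarrow> y \<le> z \<Longrightarrow> y \<in> X"
  unfolding convex_nat_def by blast

lemma covers_range_exchange:
  assumes S: "covers_range J lo hi S" and \<iota>: "{lo..q} \<subseteq> J \<iota>"
    and D: "\<And>l d. l \<in> S \<inter> D \<Longrightarrow> q < d \<Longrightarrow> d \<le> hi \<Longrightarrow> covers_step J l d \<Longrightarrow>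
      \<exists>l'\<in>S - D. covers_step J l' d"
  shows "covers_range J lo hi (S - D \<union> {\<iota>})"
  unfolding covers_range_def
proof (intro allI impI)
  fix d assume d: "lo < d \<and> d \<le> hi"
  show "\<exists>l\<in>S - D \<union> {\<iota>}. covers_step J l d"
  proof (cases "d \<le> q")
    case True
    then have "d - 1 \<in> {lo..q}" "d \<in> {lo..q}" using d by auto
    then have "covers_step J \<iota> d" using \<iota> unfolding covers_step_def by blast
    then show ?thesis by blast
  next
    case False
    obtain l where "l \<in> S" "covers_step J l d" using S d unfolding covers_range_def by blast
    then show ?thesis using D[of l d] False d by (cases "l \<in> D") auto
  qed
qed

locale interval_cover =
  fixes J :: "'l \<Rightarrow> nat set" and lo hi :: nat and F :: "'l set" and g :: "'l \<Rightarrow> nat"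
  assumes finite_F: "finite F" and convex_F: "\<And>l. l \<in> F \<Longrightarrow> convex_nat (J l)"
    and subset_F: "\<And>l. l \<in> F \<Longrightarrow> J l \<subseteq> {lo..hi}"
    and F_covers: "covers_range J lo hi F" and lo_less_hi: "lo < hi"
begin

definition "covers = {S. S \<subseteq> F \<and> covers_range J lo hi S}"
definition "min_card = Min (card ` covers)"
definition "min_covers = {S \<in> covers. card S = min_card}"

lemma covers_stepI:
  assumes "l \<in> F" "a \<in> J l" "b \<in> J l" "a < d" "d \<le> b"
  shows "covers_step J l d"
  using convex_natD[OF convex_F[OF assms(1)] assms(2,3)] assms(4,5) unfolding covers_step_def
  by simp

lemma finite_covers: "finite covers"
  unfolding covers_def using finite_F by simp

lemma min_covers_nonempty: "min_covers \<noteq> {}"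
proof -
  have "F \<in> covers" unfolding covers_def using F_covers by simp
  then have "min_card \<in> card ` covers" unfolding min_card_def
    using finite_covers by (intro Min_in) auto
  then show ?thesis unfolding min_covers_def by auto
qed

lemma min_covers_card_le:
  "S \<in> min_covers \<Longrightarrow> S' \<subseteq> F \<Longrightarrow> covers_range J lo hi S' \<Longrightarrow> card S \<le> card S'"
  unfolding min_covers_def min_card_def using finite_covers by (auto simp: covers_def)

lemma min_covers_cover: "S \<in> min_covers \<Longrightarrow> S \<subseteq> F \<and> covers_range J lo hi S"
  unfolding min_covers_def covers_def by auto

lemma min_covers_finite: "S \<in> min_covers \<Longrightarrow> finite S"
  using min_covers_cover finite_F finite_subset by blast

lemma min_cover_in_F: "S \<in> min_covers \<Longrightarrow> l \<in> S \<Longrightarrow> l \<in> F"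
  using min_covers_cover by blast

lemma private_point_exists:
  assumes S: "S \<in> min_covers" and l: "l \<in> S"
  shows "\<exists>d. lo < d \<and> d \<le> hi \<and> covers_step J l d \<and> (\<forall>l'\<in>S. l' \<noteq> l \<longrightarrow> \<not> covers_step J l' d)"
proof (rule ccontr)
  assume "\<not> ?thesis"
  then have "covers_range J lo hi (S - {l})"
    using min_covers_cover[OF S] unfolding covers_range_def by blast
  then have "card S \<le> card (S - {l})" using min_covers_card_le[OF S] min_covers_cover[OF S] by blast
  moreover have "card (S - {l}) < card S" by (rule card_Diff1_less[OF min_covers_finite[OF S] l])
  ultimately show False by simp
qed

definition "private_point S l = (SOME d. lo < d \<and> d \<le> hi \<and> covers_step J l d \<and>
  (\<forall>l'\<in>S. l' \<noteq> l \<longrightarrow> \<not> covers_step J l' d))"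

lemma private_point_props:
  assumes "S \<in> min_covers" "l \<in> S"
  shows "lo < private_point S l" "private_point S l \<le> hi" "covers_step J l (private_point S l)"
    "\<And>l'. l' \<in> S \<Longrightarrow> l' \<noteq> l \<Longrightarrow> \<not> covers_step J l' (private_point S l)"
  using someI_ex[OF private_point_exists[OF assms]] unfolding private_point_def by blast+

lemma private_point_not_straddled:
  assumes S: "S \<in> min_covers" and A: "A \<in> S" and B: "B \<in> S" "B \<noteq> A"
    and ab: "a \<in> J B" "b \<in> J B" "a < private_point S A" "private_point S A \<le> b"
  shows False
  using covers_stepI[OF min_cover_in_F[OF S B(1)] ab] private_point_props(4)[OF S A B] by simp

text \<open>Otherwise one of two intervals containing \<open>q\<close> would cover the private step of the other.\<close>

lemma private_points_separate:
  assumes S: "S \<in> min_covers" and A: "A \<in> S" and B: "B \<in> S" and AB: "A \<noteq> B"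
    and qA: "q \<in> J A" and qB: "q \<in> J B"
  shows "(private_point S A \<le> q) \<noteq> (private_point S B \<le> q)"
proof -
  have not_both_le:
    "\<not> (private_point S A \<le> q \<and> private_point S B \<le> q \<and> private_point S A \<le> private_point S B)"
    if "A \<in> S" "B \<in> S" "A \<noteq> B" "q \<in> J A" for A B
  proof
    assume h: "private_point S A \<le> q \<and> private_point S B \<le> q \<and>
      private_point S A \<le> private_point S B"
    have "private_point S A - 1 \<in> J A" "0 < private_point S A"
      using private_point_props(1,3)[OF S that(1)] unfolding covers_step_def by auto
    moreover have "private_point S A - 1 < private_point S B" using h \<open>0 < _\<close> by linarith
    ultimately show False using private_point_not_straddled[OF S that(2,1) that(3) _ that(4)] h
      by blast
  qed
  have not_both_gt:
    "\<not> (q < private_point S A \<and> q < private_point S B \<and> private_point S B \<le> private_point S A)"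
    if "A \<in> S" "B \<in> S" "A \<noteq> B" "q \<in> J A" for A B
  proof
    assume h: "q < private_point S A \<and> q < private_point S B \<and>
      private_point S B \<le> private_point S A"
    have "private_point S A \<in> J A"
      using private_point_props(3)[OF S that(1)] unfolding covers_step_def by simp
    then show False using private_point_not_straddled[OF S that(2,1) that(3) that(4)] h by blast
  qed
  show ?thesis
    using not_both_le[OF A B AB qA] not_both_le[OF B A AB[symmetric] qB]
      not_both_gt[OF A B AB qA] not_both_gt[OF B A AB[symmetric] qB]
    by linarith
qed

lemma min_cover_ply_le2:
  assumes S: "S \<in> min_covers"
  shows "card {l\<in>S. q \<in> J l} \<le> 2"
proof (rule ccontr)
  assume "\<not> ?thesis"
  then have "3 \<le> card {l\<in>S. q \<in> J l}" by simp
  then obtain X where X: "X \<subseteq> {l\<in>S. q \<in> J l}" "card X = 3"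
    by (rule obtain_subset_with_card_n)
  then obtain A B C where ABC: "X = {A, B, C}" "A \<noteq> B" "A \<noteq> C" "B \<noteq> C"
    by (auto simp: card_3_iff)
  have m: "A \<in> S" "B \<in> S" "C \<in> S" "q \<in> J A" "q \<in> J B" "q \<in> J C" using X ABC by auto
  have "(private_point S A \<le> q) \<noteq> (private_point S B \<le> q)"
    "(private_point S A \<le> q) \<noteq> (private_point S C \<le> q)"
    "(private_point S B \<le> q) \<noteq> (private_point S C \<le> q)"
    using private_points_separate[OF S m(1,2) ABC(2) m(4,5)]
      private_points_separate[OF S m(1,3) ABC(3) m(4,6)]
      private_points_separate[OF S m(2,3) ABC(4) m(5,6)] by auto
  then show False by argo
qed

text \<open>In a minimum cover exactly one interval covers the first step.\<close>

definition "top_interval S = (THE l. l \<in> S \<and> covers_step J l (Suc lo))"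

lemma min_cover_top_unique:
  assumes S: "S \<in> min_covers" and A: "A \<in> S" "covers_step J A (Suc lo)"
    and B: "B \<in> S" "covers_step J B (Suc lo)"
  shows "A = B"
proof (rule ccontr)
  assume AB: "A \<noteq> B"
  have "lo \<in> J A" "lo \<in> J B" using A B unfolding covers_step_def by auto
  from private_points_separate[OF S A(1) B(1) AB this] show False
    using private_point_props(1)[OF S A(1)] private_point_props(1)[OF S B(1)] by simp
qed

lemma top_interval_props:
  assumes S: "S \<in> min_covers"
  shows "top_interval S \<in> S" "covers_step J (top_interval S) (Suc lo)"
proof -
  have "\<exists>l\<in>S. covers_step J l (Suc lo)"
    using min_covers_cover[OF S] lo_less_hi unfolding covers_range_def by auto
  then have "\<exists>!l. l \<in> S \<and> covers_step J l (Suc lo)" using min_cover_top_unique[OF S] by blast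
  then have "top_interval S \<in> S \<and> covers_step J (top_interval S) (Suc lo)"
    unfolding top_interval_def by (rule theI')
  then show "top_interval S \<in> S" "covers_step J (top_interval S) (Suc lo)" by auto
qed

lemma top_interval_eq: "S \<in> min_covers \<Longrightarrow> l \<in> S \<Longrightarrow> covers_step J l (Suc lo) \<Longrightarrow> top_interval S = l"
  using top_interval_props min_cover_top_unique by blast

lemma non_top_not_lo:
  assumes S: "S \<in> min_covers" and A: "A \<in> S" "A \<noteq> top_interval S"
  shows "lo \<notin> J A"
proof
  assume lo: "lo \<in> J A"
  have "private_point S A \<in> J A" "lo < private_point S A"
    using private_point_props(1,3)[OF S A(1)] unfolding covers_step_def by auto
  then have "covers_step J A (Suc lo)" using covers_stepI[OF min_cover_in_F[OF S A(1)] lo] by simp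
  then show False using top_interval_eq[OF S A(1)] A(2) by simp
qed

lemma min_cover_exchange_top_and_one:
  assumes S: "S \<in> min_covers" and \<iota>: "{lo..q} \<subseteq> J \<iota>"
    and A: "A \<in> S" "A \<noteq> top_interval S" "q \<in> J A" "private_point S A \<le> q"
    and B: "B \<in> S" "B \<noteq> top_interval S" "B \<noteq> A" "q \<in> J B" "q < private_point S B"
  shows "covers_range J lo hi (S - {top_interval S, A} \<union> {\<iota>})"
proof (rule covers_range_exchange[OF conjunct2[OF min_covers_cover[OF S]] \<iota>])
  let ?t = "top_interval S" and ?p = "private_point S"
  have t: "?t \<in> S" "lo \<in> J ?t" using top_interval_props[OF S] unfolding covers_step_def by auto
  fix l d assume l: "l \<in> S \<inter> {?t, A}" and d: "q < d" "d \<le> hi" and ld: "covers_step J l d"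
  then have dl: "d \<in> J l" unfolding covers_step_def by simp
  show "\<exists>l'\<in>S - {?t, A}. covers_step J l' d"
  proof (cases "l = ?t")
    case True
    then have "\<not> ?p A \<le> d"
      using private_point_not_straddled[OF S A(1) t(1) A(2)[symmetric] t(2)] dl
        private_point_props(1)[OF S A(1)] by blast
    then show ?thesis using A(4) d by simp
  next
    case False
    then have lA: "l = A" using l by simp
    have "?p B \<in> J B" using private_point_props(3)[OF S B(1)] unfolding covers_step_def by simp
    moreover have "\<not> ?p B \<le> d"
      using private_point_not_straddled[OF S B(1) A(1) B(3)[symmetric] A(3)] dl lA B(5) by blast
    ultimately have "covers_step J B d"
      using covers_stepI[OF min_cover_in_F[OF S B(1)] B(4)] d by simp
    then show ?thesis using B(1-3) by auto
  qed
qed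

lemma min_cover_non_top_ply_le1:
  assumes S: "S \<in> min_covers" and \<iota>F: "\<iota> \<in> F" and \<iota>: "{lo..q} \<subseteq> J \<iota>"
  shows "card {l\<in>S. l \<noteq> top_interval S \<and> q \<in> J l} \<le> 1"
proof (rule ccontr)
  let ?t = "top_interval S" and ?p = "private_point S"
  assume "\<not> ?thesis"
  then have "2 \<le> card {l\<in>S. l \<noteq> ?t \<and> q \<in> J l}" by simp
  then obtain X where X: "X \<subseteq> {l\<in>S. l \<noteq> ?t \<and> q \<in> J l}" "card X = 2"
    by (rule obtain_subset_with_card_n)
  then obtain A0 B0 where AB0: "A0 \<noteq> B0" "{A0, B0} \<subseteq> {l\<in>S. l \<noteq> ?t \<and> q \<in> J l}"
    unfolding card_2_iff by blast
  then have "(?p A0 \<le> q) \<noteq> (?p B0 \<le> q)" using private_points_separate[OF S] by simp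
  then obtain A B where A: "A \<in> S" "A \<noteq> ?t" "q \<in> J A" "?p A \<le> q"
    and B: "B \<in> S" "B \<noteq> ?t" "B \<noteq> A" "q \<in> J B" "q < ?p B"
    using AB0 by (cases "?p A0 \<le> q") auto
  have "?t \<in> S" using top_interval_props[OF S] by simp
  have "S - {?t, A} \<union> {\<iota>} \<subseteq> F" using min_covers_cover[OF S] \<iota>F by auto
  then have "card S \<le> card (S - {?t, A} \<union> {\<iota>})"
    using min_covers_card_le[OF S] min_cover_exchange_top_and_one[OF S \<iota> A B] by blast
  also have "\<dots> \<le> card S - 2 + 1"
    using card_Un_le[of "S - {?t, A}" "{\<iota>}"] \<open>?t \<in> S\<close> A(1,2) min_covers_finite[OF S]
    by (simp add: card_Diff_subset)
  finally show False
    using card_mono[OF min_covers_finite[OF S], of "{?t, A}"] \<open>?t \<in> S\<close> A(1,2) by simp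
qed

definition "best_cover = (SOME S. S \<in> min_covers \<and>
  (\<forall>S'\<in>min_covers. g (top_interval S') \<le> g (top_interval S)))"

lemma best_cover_props:
  "best_cover \<in> min_covers"
  "\<And>S'. S' \<in> min_covers \<Longrightarrow> g (top_interval S') \<le> g (top_interval best_cover)"
proof -
  have fin: "finite ((\<lambda>S. g (top_interval S)) ` min_covers)"
    using finite_covers unfolding min_covers_def by simp
  have "Max ((\<lambda>S. g (top_interval S)) ` min_covers) \<in> (\<lambda>S. g (top_interval S)) ` min_covers"
    using fin min_covers_nonempty by (intro Max_in) auto
  then obtain S0 where S0: "S0 \<in> min_covers"
    "g (top_interval S0) = Max ((\<lambda>S. g (top_interval S)) ` min_covers)" by auto
  then have "\<forall>S'\<in>min_covers. g (top_interval S') \<le> g (top_interval S0)" using fin by simp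
  then have "\<exists>S. S \<in> min_covers \<and> (\<forall>S'\<in>min_covers. g (top_interval S') \<le> g (top_interval S))"
    using S0(1) by blast
  then have "best_cover \<in> min_covers \<and>
      (\<forall>S'\<in>min_covers. g (top_interval S') \<le> g (top_interval best_cover))"
    unfolding best_cover_def by (rule someI_ex)
  then show "best_cover \<in> min_covers"
    "\<And>S'. S' \<in> min_covers \<Longrightarrow> g (top_interval S') \<le> g (top_interval best_cover)" by auto
qed

text \<open>Exchanging the top interval for \<open>\<iota>\<close> yields another minimum cover, whose top interval
  is \<open>\<iota>\<close>.\<close>

lemma best_cover_top_maximal:
  assumes \<iota>F: "\<iota> \<in> F" and \<iota>: "{lo..q} \<subseteq> J \<iota>"
    and A: "A \<in> best_cover" "A \<noteq> top_interval best_cover" "q \<in> J A"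
  shows "g \<iota> \<le> g (top_interval best_cover)"
proof -
  let ?S = best_cover and ?t = "top_interval best_cover"
  have S: "?S \<in> min_covers" using best_cover_props(1) .
  have t: "?t \<in> ?S" "lo \<in> J ?t" using top_interval_props[OF S] unfolding covers_step_def by auto
  have "q \<in> {lo..hi}" using subset_F A(3) min_covers_cover[OF S] A(1) by blast
  then have q: "lo < q" using non_top_not_lo[OF S A(1,2)] A(3) by (cases "q = lo") auto
  have cov: "covers_range J lo hi (?S - {?t} \<union> {\<iota>})"
  proof (rule covers_range_exchange[OF conjunct2[OF min_covers_cover[OF S]] \<iota>])
    fix l d assume l: "l \<in> ?S \<inter> {?t}" and d: "q < d" "d \<le> hi" and ld: "covers_step J l d"
    have "d \<in> J ?t" using l ld unfolding covers_step_def by simp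
    then have "\<not> private_point ?S A \<le> d"
      using private_point_not_straddled[OF S A(1) t(1) A(2)[symmetric] t(2)]
        private_point_props(1)[OF S A(1)] by blast
    moreover have "private_point ?S A \<in> J A"
      using private_point_props(3)[OF S A(1)] unfolding covers_step_def by simp
    ultimately have "covers_step J A d"
      using covers_stepI[OF min_cover_in_F[OF S A(1)] A(3)] d by simp
    then show "\<exists>l'\<in>?S - {?t}. covers_step J l' d" using A by blast
  qed
  have "?S - {?t} \<union> {\<iota>} \<subseteq> F" using min_covers_cover[OF S] \<iota>F by auto
  then have "card ?S \<le> card (?S - {?t} \<union> {\<iota>})" using min_covers_card_le[OF S] cov by blast
  moreover have "card (?S - {?t} \<union> {\<iota>}) \<le> card ?S"
  proof -
    have "0 < card ?S" using t(1) min_covers_finite[OF S] card_gt_0_iff by blast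
    then show ?thesis using card_Un_le[of "?S - {?t}" "{\<iota>}"] t(1) min_covers_finite[OF S] by simp
  qed
  ultimately have S': "?S - {?t} \<union> {\<iota>} \<in> min_covers"
    using S \<open>?S - {?t} \<union> {\<iota>} \<subseteq> F\<close> cov unfolding min_covers_def covers_def by auto
  have "covers_step J \<iota> (Suc lo)" using \<iota> q unfolding covers_step_def by auto
  then have "top_interval (?S - {?t} \<union> {\<iota>}) = \<iota>" using top_interval_eq[OF S'] by auto
  then show ?thesis using best_cover_props(2)[OF S'] by simp
qed

end

section \<open>Optimal covers of the up-links\<close>

context wtap_setting begin

definition "hard = {u \<in> U. \<not> (\<exists>l\<in>F. lower_ends u \<subseteq> lower_ends l)}"
definition "vert_at u d = root_path (up_bot u) ! d"
definition "depths u l = depth ` (verts u \<inter> verts l)"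
definition "lo u = depth (up_top u)"
definition "hi u = depth (up_bot u)"

text \<open>The vertices of \<open>P\<^sub>u\<close> are indexed by their depths \<open>{lo u..hi u}\<close>, and each link \<open>l\<close> meets
  \<open>P\<^sub>u\<close> in an interval \<open>depths u l\<close>. We fix a minimum cover of \<open>u\<close> by links of \<open>F\<close> whose top link
  has the deepest possible apex.\<close>

definition "opt_cover u = interval_cover.best_cover (depths u) (lo u) (hi u) F (\<lambda>l. depth (apex l))"
definition "top_link u = interval_cover.top_interval (depths u) (lo u) (opt_cover u)"
definition "inner_links u = opt_cover u - {top_link u}"

lemma up_ends_in_V: "u \<in> U \<Longrightarrow> up_top u \<in> V \<and> up_bot u \<in> V"
  using up_ends_props ancestor_in_V by blast

lemma vert_at_props: assumes u: "u \<in> U" and d: "lo u \<le> d" "d \<le> hi u"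
  shows "vert_at u d \<in> verts u" "depth (vert_at u d) = d" "ancestor (vert_at u d) (up_bot u)"
proof -
  have bV: "up_bot u \<in> V" using up_ends_in_V[OF u] by simp
  show dv: "depth (vert_at u d) = d" unfolding vert_at_def
    using depth_root_path_nth[OF bV] d hi_def by simp
  show vb: "ancestor (vert_at u d) (up_bot u)"
    using ancestor_iff bV dv d hi_def unfolding vert_at_def by simp
  have "ancestor (up_top u) (vert_at u d)"
    using ancestor_by_depth[OF up_ends_props(2)[OF u] vb] dv d lo_def by simp
  then show "vert_at u d \<in> verts u" using verts_up[OF u] vb by simp
qed

lemma vert_at_ancestor:
  assumes u: "u \<in> U" and d: "lo u \<le> d" "d \<le> d'" "d' \<le> hi u"
  shows "ancestor (vert_at u d) (vert_at u d')"
proof -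
  have d': "lo u \<le> d'" "d \<le> hi u" using d by auto
  then have "depth (vert_at u d) \<le> depth (vert_at u d')" using vert_at_props(2)[OF u] d by simp
  then show ?thesis
    using ancestor_by_depth[OF vert_at_props(3)[OF u] vert_at_props(3)[OF u]] d d' by blast
qed

lemma verts_up_props: assumes u: "u \<in> U" and x: "x \<in> verts u"
  shows "vert_at u (depth x) = x" "lo u \<le> depth x" "depth x \<le> hi u"
    "ancestor (up_top u) x" "ancestor x (up_bot u)"
proof -
  show tx: "ancestor (up_top u) x" and xb: "ancestor x (up_bot u)" using x verts_up[OF u] by auto
  show "vert_at u (depth x) = x" using xb ancestor_iff unfolding vert_at_def by simp
  show "lo u \<le> depth x" using tx ancestor_depth_le lo_def by simp
  show "depth x \<le> hi u" using xb ancestor_depth_le hi_def by simp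
qed

lemma verts_up_ancestor:
  assumes u: "u \<in> U" and x: "x \<in> verts u" and y: "y \<in> verts u" and d: "depth y \<le> depth x"
  shows "ancestor y x"
  using ancestor_by_depth[OF verts_up_props(5)[OF u y] verts_up_props(5)[OF u x] d] .

lemma depths_iff: assumes u: "u \<in> U" and x: "x \<in> verts u"
  shows "depth x \<in> depths u l \<longleftrightarrow> x \<in> verts l"
proof
  assume "depth x \<in> depths u l"
  then obtain y where y: "y \<in> verts u" "y \<in> verts l" "depth y = depth x"
    unfolding depths_def by auto
  have "y = x" using verts_up_props(1)[OF u y(1)] verts_up_props(1)[OF u x] y(3) by metis
  then show "x \<in> verts l" using y by simp
next
  assume "x \<in> verts l" then show "depth x \<in> depths u l" unfolding depths_def using x by auto
qed

lemma depths_subset: assumes u: "u \<in> U" shows "depths u l \<subseteq> {lo u..hi u}"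
  unfolding depths_def using verts_up_props[OF u] by auto

lemma depths_vert_at: assumes u: "u \<in> U" and d: "lo u \<le> d" "d \<le> hi u"
  shows "d \<in> depths u l \<longleftrightarrow> vert_at u d \<in> verts l"
  using depths_iff[OF u vert_at_props(1)[OF u d]] vert_at_props(2)[OF u d] by simp

lemma depths_convex:
  assumes u: "u \<in> U" and l: "l \<in> L"
  shows "convex_nat (depths u l)"
  unfolding convex_nat_def
proof (intro allI impI)
  fix x y z assume h: "x \<in> depths u l" "z \<in> depths u l" "x \<le> y" "y \<le> z"
  have r: "lo u \<le> x" "x \<le> hi u" "lo u \<le> z" "z \<le> hi u" using h(1,2) depths_subset[OF u, of l] by auto
  have xl: "vert_at u x \<in> verts l" using depths_vert_at[OF u r(1,2)] h(1) by simp
  have zl: "vert_at u z \<in> verts l" using depths_vert_at[OF u r(3,4)] h(2) by simp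
  have "ancestor (apex l) (vert_at u y)"
    using ancestor_trans[OF apex_ancestor[OF l xl] vert_at_ancestor[OF u r(1) h(3)]] h r(4) by simp
  then have "vert_at u y \<in> verts l"
    using verts_between[OF l zl _ vert_at_ancestor[OF u _ h(4) r(4)]] h(3) r(1) by simp
  then show "y \<in> depths u l" using depths_vert_at[OF u] r h by simp
qed

lemma covers_step_iff:
  assumes u: "u \<in> U" and l: "l \<in> L" and d: "lo u < d" "d \<le> hi u"
  shows "covers_step (depths u) l d \<longleftrightarrow> vert_at u d \<in> lower_ends l"
proof -
  have d1: "lo u \<le> d - 1" "d - 1 \<le> hi u" and d0: "lo u \<le> d" using d by auto
  have anc: "ancestor (vert_at u (d - 1)) (vert_at u d)"
    using vert_at_ancestor[OF u d1(1)] d by simp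
  have dep: "depth (vert_at u (d - 1)) = d - 1" "depth (vert_at u d) = d"
    using vert_at_props(2)[OF u] d1 d0 d(2) by auto
  show ?thesis
  proof
    assume "covers_step (depths u) l d"
    then have vs: "vert_at u (d - 1) \<in> verts l" "vert_at u d \<in> verts l"
      unfolding covers_step_def using depths_vert_at[OF u] d1 d0 d(2) by auto
    have "depth (apex l) \<le> d - 1"
      using ancestor_depth_le[OF apex_ancestor[OF l vs(1)]] dep by simp
    then have "apex l \<noteq> vert_at u d" using dep d by auto
    then show "vert_at u d \<in> lower_ends l" using vs(2) unfolding lower_ends_def by simp
  next
    assume "vert_at u d \<in> lower_ends l"
    then have vl: "vert_at u d \<in> verts l" and na: "vert_at u d \<noteq> apex l"
      unfolding lower_ends_def by auto
    have a: "ancestor (apex l) (vert_at u d)" using apex_ancestor[OF l vl] .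
    have "depth (apex l) < d" using ancestor_depth_less[OF a] na dep by auto
    then have "depth (apex l) \<le> depth (vert_at u (d - 1))" using dep by simp
    then have "vert_at u (d - 1) \<in> verts l"
      using verts_between[OF l vl ancestor_by_depth[OF a anc] anc] by simp
    then show "covers_step (depths u) l d"
      unfolding covers_step_def using depths_vert_at[OF u] d1 d0 d(2) vl by auto
  qed
qed

lemma lower_ends_up_vert_at: assumes u: "u \<in> U"
  shows "lower_ends u = {vert_at u d | d. lo u < d \<and> d \<le> hi u}"
proof (intro equalityI subsetI)
  fix x assume x: "x \<in> lower_ends u"
  then have xl: "x \<in> verts u" and xt: "x \<noteq> up_top u"
    using lower_ends_up[OF u] verts_up[OF u] by auto
  have "lo u < depth x"
  proof -
    have "lo u \<le> depth x" using verts_up_props[OF u xl] by simp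
    moreover have "depth x \<noteq> lo u"
      using xt ancestor_depth_eq[OF verts_up_props(4)[OF u xl]] lo_def by metis
    ultimately show ?thesis by simp
  qed
  moreover have "x = vert_at u (depth x)" "depth x \<le> hi u" using verts_up_props[OF u xl] by auto
  ultimately show "x \<in> {vert_at u d | d. lo u < d \<and> d \<le> hi u}" by blast
next
  fix x assume "x \<in> {vert_at u d | d. lo u < d \<and> d \<le> hi u}"
  then obtain d where d: "x = vert_at u d" "lo u < d" "d \<le> hi u" by auto
  have "x \<in> verts u" using vert_at_props(1)[OF u] d by simp
  moreover have "x \<noteq> up_top u"
  proof -
    have "depth x = d" using vert_at_props(2)[OF u] d by simp
    then show ?thesis using d(2) lo_def by auto
  qed
  ultimately show "x \<in> lower_ends u" using lower_ends_up[OF u] verts_up[OF u] by auto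
qed

lemma covers_range_iff: assumes u: "u \<in> U" and S: "S \<subseteq> L"
  shows "covers_range (depths u) (lo u) (hi u) S \<longleftrightarrow> lower_ends u \<subseteq> (\<Union>l\<in>S. lower_ends l)"
proof
  assume h: "covers_range (depths u) (lo u) (hi u) S"
  show "lower_ends u \<subseteq> (\<Union>l\<in>S. lower_ends l)"
  proof
    fix x assume "x \<in> lower_ends u"
    then obtain d where d: "x = vert_at u d" "lo u < d" "d \<le> hi u"
      using lower_ends_up_vert_at[OF u] by auto
    then obtain l where "l \<in> S" "covers_step (depths u) l d"
      using h unfolding covers_range_def by auto
    then show "x \<in> (\<Union>l\<in>S. lower_ends l)" using covers_step_iff[OF u _ d(2,3)] S d(1) by auto
  qed
next
  assume h: "lower_ends u \<subseteq> (\<Union>l\<in>S. lower_ends l)"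
  show "covers_range (depths u) (lo u) (hi u) S" unfolding covers_range_def
  proof (intro allI impI)
    fix d assume d: "lo u < d \<and> d \<le> hi u"
    then have "vert_at u d \<in> lower_ends u" using lower_ends_up_vert_at[OF u] by auto
    then obtain l where "l \<in> S" "vert_at u d \<in> lower_ends l" using h by auto
    then show "\<exists>l\<in>S. covers_step (depths u) l d" using covers_step_iff[OF u _] d S by auto
  qed
qed

lemma lo_less_hi: assumes u: "u \<in> U" shows "lo u < hi u"
  using ancestor_depth_less[OF up_ends_props(2,3)[OF u]] lo_def hi_def by simp

lemma interval_cover_up: assumes u: "u \<in> U" shows "interval_cover (depths u) (lo u) (hi u) F"
proof
  show "finite F" using finite_F .
  show "\<And>l. l \<in> F \<Longrightarrow> convex_nat (depths u l)" using depths_convex[OF u] F_subset_L by auto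
  show "\<And>l. l \<in> F \<Longrightarrow> depths u l \<subseteq> {lo u..hi u}" using depths_subset[OF u] by auto
  show "covers_range (depths u) (lo u) (hi u) F"
    using covers_range_iff[OF u F_subset_L] F_covers_up[OF u] by auto
  show "lo u < hi u" using lo_less_hi[OF u] .
qed

lemma opt_cover_min: "u \<in> U \<Longrightarrow> opt_cover u \<in> interval_cover.min_covers (depths u) (lo u) (hi u) F"
  unfolding opt_cover_def using interval_cover.best_cover_props(1)[OF interval_cover_up] .

lemma opt_cover_subset: "u \<in> U \<Longrightarrow> opt_cover u \<subseteq> F"
  using interval_cover.min_covers_cover[OF interval_cover_up opt_cover_min] by blast

lemma opt_cover_covers: assumes u: "u \<in> U" shows "lower_ends u \<subseteq> (\<Union>l\<in>opt_cover u. lower_ends l)"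
proof -
  have "covers_range (depths u) (lo u) (hi u) (opt_cover u)"
    using interval_cover.min_covers_cover[OF interval_cover_up[OF u] opt_cover_min[OF u]] by blast
  moreover have "opt_cover u \<subseteq> L" using opt_cover_subset[OF u] F_subset_L by auto
  ultimately show ?thesis using covers_range_iff[OF u] by blast
qed

lemma finite_opt_cover: "u \<in> U \<Longrightarrow> finite (opt_cover u)"
  using opt_cover_subset finite_F finite_subset by blast

lemma top_link_in: "u \<in> U \<Longrightarrow> top_link u \<in> opt_cover u"
  unfolding top_link_def
  using interval_cover.top_interval_props(1)[OF interval_cover_up opt_cover_min] .

lemma top_link_in_F: "u \<in> U \<Longrightarrow> top_link u \<in> F"
  using top_link_in opt_cover_subset by blast

lemma inner_links_in_F: "u \<in> U \<Longrightarrow> l \<in> inner_links u \<Longrightarrow> l \<in> F"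
  using opt_cover_subset unfolding inner_links_def by blast

lemma top_link_covers_top_edge: assumes u: "u \<in> U"
  shows "vert_at u (Suc (lo u)) \<in> lower_ends (top_link u)"
proof -
  have "covers_step (depths u) (top_link u) (Suc (lo u))" unfolding top_link_def
    using interval_cover.top_interval_props(2)[OF interval_cover_up[OF u] opt_cover_min[OF u]]
    by simp
  then show ?thesis
    using covers_step_iff[OF u] top_link_in_F[OF u] F_subset_L lo_less_hi[OF u] by auto
qed

lemma apex_top_link: assumes u: "u \<in> U" shows "ancestor (apex (top_link u)) (up_top u)"
proof -
  let ?z = "vert_at u (Suc (lo u))"
  have tl: "top_link u \<in> L" using top_link_in_F[OF u] F_subset_L by auto
  have z: "?z \<in> verts (top_link u)" "?z \<noteq> apex (top_link u)"
    using top_link_covers_top_edge[OF u] unfolding lower_ends_def by auto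
  have a: "ancestor (apex (top_link u)) ?z" using apex_ancestor[OF tl z(1)] .
  have dz: "depth ?z = Suc (lo u)" using vert_at_props(2)[OF u] lo_less_hi[OF u] by simp
  have "depth (apex (top_link u)) < depth ?z" using ancestor_depth_less[OF a] z(2) by auto
  then have "depth (apex (top_link u)) \<le> depth (up_top u)" using dz lo_def by simp
  moreover have "ancestor (up_top u) ?z"
    using verts_up_props(4)[OF u vert_at_props(1)[OF u]] lo_less_hi[OF u] by simp
  ultimately show ?thesis using ancestor_by_depth[OF a] by simp
qed

lemma apex_inner_link: assumes u: "u \<in> U" and A: "A \<in> inner_links u" shows "apex A \<in> lower_ends u"
proof -
  note ic = interval_cover_up[OF u]
  have AS: "A \<in> opt_cover u" "A \<noteq> top_link u" using A unfolding inner_links_def by auto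
  have AL: "A \<in> L" using AS opt_cover_subset[OF u] F_subset_L by auto
  have nlo: "lo u \<notin> depths u A"
    using interval_cover.non_top_not_lo[OF ic opt_cover_min[OF u] AS(1)] AS(2)
    unfolding top_link_def by simp
  obtain d where d: "lo u < d" "d \<le> hi u" "covers_step (depths u) A d"
    using interval_cover.private_point_props(1,2,3)[OF ic opt_cover_min[OF u] AS(1)] by blast
  have fin: "finite (depths u A)" using depths_subset[OF u] finite_subset by blast
  have ne: "depths u A \<noteq> {}" using d unfolding covers_step_def by auto
  define x where "x = Min (depths u A)"
  have xJ: "x \<in> depths u A" unfolding x_def using fin ne by simp
  have xr: "lo u \<le> x" "x \<le> hi u" using xJ depths_subset[OF u, of A] by auto
  have xlo: "lo u < x" using xr nlo xJ by (cases "x = lo u") auto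
  have wl: "vert_at u x \<in> verts A" using depths_vert_at[OF u xr] xJ by simp
  have a: "ancestor (apex A) (vert_at u x)" using apex_ancestor[OF AL wl] .
  have "apex A = vert_at u x"
  proof (rule ccontr)
    assume ne2: "apex A \<noteq> vert_at u x"
    have x1: "lo u \<le> x - 1" "x - 1 \<le> hi u" using xlo xr by auto
    have "depth (apex A) < depth (vert_at u x)" using ancestor_depth_less[OF a ne2] .
    then have dd: "depth (apex A) \<le> depth (vert_at u (x - 1))"
      using vert_at_props(2)[OF u xr] vert_at_props(2)[OF u x1] by simp
    have anc1: "ancestor (vert_at u (x - 1)) (vert_at u x)"
      using vert_at_ancestor[OF u x1(1)] xr by simp
    have "ancestor (apex A) (vert_at u (x - 1))" using ancestor_by_depth[OF a anc1 dd] .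
    then have "vert_at u (x - 1) \<in> verts A" using verts_between[OF AL wl _ anc1] by simp
    then have "x - 1 \<in> depths u A" using depths_vert_at[OF u x1] by simp
    then have "x \<le> x - 1" unfolding x_def using fin by simp
    then show False using xlo by simp
  qed
  moreover have "vert_at u x \<in> lower_ends u" using lower_ends_up_vert_at[OF u] xlo xr by auto
  ultimately show ?thesis by simp
qed

lemma apex_inner_link_below_top:
  assumes u: "u \<in> U" and l: "l \<in> inner_links u"
  shows "depth (up_top u) < depth (apex l)"
proof -
  have "apex l \<in> lower_ends u" using apex_inner_link[OF u l] .
  then have "ancestor (up_top u) (apex l)" "up_top u \<noteq> apex l" unfolding lower_ends_up[OF u] by auto
  then show ?thesis by (rule ancestor_depth_less)
qed

lemma depths_prefix:
  assumes u: "u \<in> U" and x: "x \<in> verts u" and seg: "\<forall>y\<in>verts u. ancestor y x \<longrightarrow> y \<in> verts \<iota>"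
  shows "{lo u..depth x} \<subseteq> depths u \<iota>"
proof
  fix d assume d: "d \<in> {lo u..depth x}"
  then have dr: "lo u \<le> d" "d \<le> hi u" using verts_up_props[OF u x] by auto
  have "ancestor (vert_at u d) x"
    using verts_up_ancestor[OF u x vert_at_props(1)[OF u dr]] vert_at_props(2)[OF u dr] d by simp
  then have "vert_at u d \<in> verts \<iota>" using seg vert_at_props(1)[OF u dr] by simp
  then show "d \<in> depths u \<iota>" using depths_vert_at[OF u dr] by simp
qed

lemma opt_cover_ply_le2: assumes u: "u \<in> U" and x: "x \<in> verts u"
  shows "card {l \<in> opt_cover u. x \<in> verts l} \<le> 2"
proof -
  have "{l \<in> opt_cover u. x \<in> verts l} = {l \<in> opt_cover u. depth x \<in> depths u l}"
    using depths_iff[OF u x] by simp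
  then show ?thesis
    using interval_cover.min_cover_ply_le2[OF interval_cover_up[OF u] opt_cover_min[OF u]] by simp
qed

lemma inner_links_ply_le1:
  assumes u: "u \<in> U" and iF: "\<iota> \<in> F" and x: "x \<in> verts u"
    and seg: "\<forall>y\<in>verts u. ancestor y x \<longrightarrow> y \<in> verts \<iota>"
  shows "card {l \<in> inner_links u. x \<in> verts l} \<le> 1"
proof -
  have "{l \<in> inner_links u. x \<in> verts l} =
      {l \<in> opt_cover u. l \<noteq> top_link u \<and> depth x \<in> depths u l}"
    using depths_iff[OF u x] unfolding inner_links_def by auto
  then show ?thesis
    using interval_cover.min_cover_non_top_ply_le1[OF interval_cover_up[OF u] opt_cover_min[OF u] iF
        depths_prefix[OF u x seg]]
    unfolding top_link_def by simp
qed

lemma apex_top_link_deepest: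
  assumes u: "u \<in> U" and iF: "\<iota> \<in> F" and x: "x \<in> verts u"
    and seg: "\<forall>y\<in>verts u. ancestor y x \<longrightarrow> y \<in> verts \<iota>" and A: "A \<in> inner_links u" "x \<in> verts A"
  shows "depth (apex \<iota>) \<le> depth (apex (top_link u))"
proof -
  have A': "A \<in> opt_cover u" "A \<noteq> top_link u" "depth x \<in> depths u A"
    using A depths_iff[OF u x] unfolding inner_links_def by auto
  show ?thesis
    using interval_cover.best_cover_top_maximal[OF interval_cover_up[OF u] iF
        depths_prefix[OF u x seg], of A] A'
    unfolding opt_cover_def top_link_def by simp
qed

end

section \<open>The forest of hard up-links\<close>

context wtap_setting begin

lemma hard_in_U: "u \<in> hard \<Longrightarrow> u \<in> U"
  unfolding hard_def by auto

lemma finite_hard: "finite hard"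
  using finite_U unfolding hard_def by simp

lemma weight_hard_le: "sum w hard \<le> sum w U"
proof (rule sum_mono2[OF finite_U])
  show "hard \<subseteq> U" unfolding hard_def by auto
  show "\<And>u. u \<in> U - hard \<Longrightarrow> 0 \<le> w u" using weight_pos U_subset_L by (auto intro: less_imp_le)
qed

definition "has_owner l = (\<exists>u\<in>hard. l \<in> inner_links u)"
definition "owner l = (THE u. u \<in> hard \<and> l \<in> inner_links u)"

lemma owner_unique:
  assumes "u \<in> hard" "l \<in> inner_links u" "u' \<in> hard" "l \<in> inner_links u'"
  shows "u = u'"
proof (rule ccontr)
  assume ne: "u \<noteq> u'"
  have "apex l \<in> lower_ends u" "apex l \<in> lower_ends u'"
    using apex_inner_link hard_in_U assms by auto
  then show False
    using lower_ends_up_disjoint[OF hard_in_U[OF assms(1)] hard_in_U[OF assms(3)] ne] by auto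
qed

lemma owner_eq: assumes "u \<in> hard" "l \<in> inner_links u" shows "owner l = u"
  unfolding owner_def
proof (rule the_equality)
  show "u \<in> hard \<and> l \<in> inner_links u" using assms by simp
  fix u' assume "u' \<in> hard \<and> l \<in> inner_links u'"
  then show "u' = u" using owner_unique[OF assms] by auto
qed

lemma owner_props: assumes "has_owner l" shows "owner l \<in> hard \<and> l \<in> inner_links (owner l)"
proof -
  obtain u where "u \<in> hard" "l \<in> inner_links u" using assms unfolding has_owner_def by auto
  then show ?thesis using owner_eq by simp
qed

definition "has_forest_parent u = has_owner (top_link u)"
definition "forest_parent u = owner (top_link u)"

lemma forest_parent_props: assumes "u \<in> hard" "has_forest_parent u"
  shows "forest_parent u \<in> hard" "top_link u \<in> inner_links (forest_parent u)"
    "apex (top_link u) \<in> lower_ends (forest_parent u)"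
    "depth (up_top (forest_parent u)) < depth (up_top u)"
proof -
  show h: "forest_parent u \<in> hard" "top_link u \<in> inner_links (forest_parent u)"
    using owner_props assms unfolding has_forest_parent_def forest_parent_def by auto
  show "apex (top_link u) \<in> lower_ends (forest_parent u)"
    using apex_inner_link[OF hard_in_U[OF h(1)] h(2)] .
  have "depth (up_top (forest_parent u)) < depth (apex (top_link u))"
    using apex_inner_link_below_top[OF hard_in_U[OF h(1)] h(2)] .
  moreover have "depth (apex (top_link u)) \<le> depth (up_top u)"
    using apex_top_link[OF hard_in_U[OF assms(1)]] ancestor_depth_le by blast
  ultimately show "depth (up_top (forest_parent u)) < depth (up_top u)" by simp
qed

function level :: "'a set \<Rightarrow> nat" where
  "level u = (if u \<in> hard \<and> has_forest_parent u then Suc (level (forest_parent u)) else 0)"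
  by auto
termination
proof (relation "measure (\<lambda>u. depth (up_top u))")
  show "wf (measure (\<lambda>u. depth (up_top u)))" by simp
  fix u assume "u \<in> hard \<and> has_forest_parent u"
  then show "(forest_parent u, u) \<in> measure (\<lambda>u. depth (up_top u))"
    using forest_parent_props(4) by simp
qed

declare level.simps[simp del]

lemma level_forest_parent:
  "u \<in> hard \<Longrightarrow> has_forest_parent u \<Longrightarrow> level u = Suc (level (forest_parent u))"
  by (subst level.simps) simp

inductive forest_ancestor :: "'a set \<Rightarrow> 'a set \<Rightarrow> bool" where
  base: "u \<in> hard \<Longrightarrow> has_forest_parent u \<Longrightarrow> forest_ancestor (forest_parent u) u"
| step: "forest_ancestor a (forest_parent u) \<Longrightarrow> u \<in> hard \<Longrightarrow> has_forest_parent u \<Longrightarrow> forest_ancestor a u"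

lemma forest_ancestor_props:
  "forest_ancestor a u \<Longrightarrow>
    a \<in> hard \<and> u \<in> hard \<and> level a < level u \<and> depth (up_top a) < depth (up_top u)"
proof (induction rule: forest_ancestor.induct)
  case (base u)
  then show ?case using forest_parent_props[OF base] level_forest_parent[OF base] by simp
next
  case (step a u)
  then show ?case using forest_parent_props[OF step(2,3)] level_forest_parent[OF step(2,3)] by simp
qed

definition "deepest_on_path u v =
  (SOME x. x \<in> verts u \<and> ancestor x v \<and> (\<forall>y\<in>verts u. ancestor y v \<longrightarrow> depth y \<le> depth x))"

lemma deepest_on_path_props:
  assumes u: "u \<in> U" and ne: "\<exists>x\<in>verts u. ancestor x v"
  shows "deepest_on_path u v \<in> verts u" "ancestor (deepest_on_path u v) v"
    "\<And>y. y \<in> verts u \<Longrightarrow> ancestor y v \<Longrightarrow> depth y \<le> depth (deepest_on_path u v)"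
proof -
  let ?Q = "{x \<in> verts u. ancestor x v}"
  have fin: "finite ?Q" using verts_in_V[OF U_in_L[OF u]] finite_V by (auto intro: finite_subset)
  have "Max (depth ` ?Q) \<in> depth ` ?Q" using fin ne by (intro Max_in) auto
  then obtain x where x: "x \<in> ?Q" "depth x = Max (depth ` ?Q)" by auto
  then have "\<exists>x. x \<in> verts u \<and> ancestor x v \<and> (\<forall>y\<in>verts u. ancestor y v \<longrightarrow> depth y \<le> depth x)"
    using fin by auto
  then have "deepest_on_path u v \<in> verts u \<and> ancestor (deepest_on_path u v) v \<and>
    (\<forall>y\<in>verts u. ancestor y v \<longrightarrow> depth y \<le> depth (deepest_on_path u v))"
    unfolding deepest_on_path_def by (rule someI_ex)
  then show "deepest_on_path u v \<in> verts u" "ancestor (deepest_on_path u v) v"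
    "\<And>y. y \<in> verts u \<Longrightarrow> ancestor y v \<Longrightarrow> depth y \<le> depth (deepest_on_path u v)" by auto
qed

lemma inner_link_deepest:
  assumes u: "u \<in> U" and l: "l \<in> inner_links u" and v: "v \<in> verts l"
  shows "deepest_on_path u v \<in> lower_ends u" "deepest_on_path u v \<in> verts l"
    "ancestor (apex l) (deepest_on_path u v)" "ancestor (deepest_on_path u v) v"
proof -
  let ?q = "deepest_on_path u v"
  have lL: "l \<in> L" using inner_links_in_F[OF u l] F_subset_L by auto
  have au: "apex l \<in> verts u" using apex_inner_link[OF u l] unfolding lower_ends_def by simp
  have av: "ancestor (apex l) v" using apex_ancestor[OF lL v] .
  have "\<exists>x\<in>verts u. ancestor x v" using au av by blast
  note q = deepest_on_path_props[OF u this]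
  show "ancestor ?q v" using q(2) .
  show aq: "ancestor (apex l) ?q" using ancestor_by_depth[OF av q(2) q(3)[OF au av]] .
  show "?q \<in> verts l" using verts_between[OF lL v aq q(2)] .
  have "depth (up_top u) < depth ?q"
    using apex_inner_link_below_top[OF u l] ancestor_depth_le[OF aq] by simp
  then show "?q \<in> lower_ends u"
    unfolding lower_ends_up[OF u] using verts_up_props(4,5)[OF u q(1)] by auto
qed

lemma verts_up_above_in_link:
  assumes u: "u \<in> U" and \<iota>: "\<iota> \<in> L" "v \<in> verts \<iota>" and a: "ancestor (apex \<iota>) (up_top u)"
    and x: "ancestor x v"
  shows "\<forall>z\<in>verts u. ancestor z x \<longrightarrow> z \<in> verts \<iota>"
proof (intro ballI impI)
  fix z assume z: "z \<in> verts u" "ancestor z x"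
  have "ancestor (apex \<iota>) z" using ancestor_trans[OF a verts_up_props(4)[OF u z(1)]] .
  then show "z \<in> verts \<iota>" using verts_between[OF \<iota> _ ancestor_trans[OF z(2) x]] by simp
qed

lemma apex_top_link_below:
  assumes u: "u \<in> U" and \<iota>: "\<iota> \<in> F" "v \<in> verts \<iota>" and a: "ancestor (apex \<iota>) (up_top u)"
    and A: "A \<in> inner_links u" "x \<in> verts A" and x: "x \<in> verts u" "ancestor x v"
  shows "ancestor (apex \<iota>) (apex (top_link u))"
proof -
  have "\<iota> \<in> L" using \<iota>(1) F_subset_L by auto
  then have "depth (apex \<iota>) \<le> depth (apex (top_link u))"
    using apex_top_link_deepest[OF u \<iota>(1) x(1) verts_up_above_in_link[OF u _ \<iota>(2) a x(2)] A] by simp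
  then show ?thesis using ancestor_by_depth[OF a apex_top_link[OF u]] by simp
qed

lemma deepest_above_forest_parent_top:
  assumes m: "m \<in> U" and \<iota>: "\<iota> \<in> inner_links m" "v \<in> verts \<iota>"
    and u: "u \<in> hard" "has_forest_parent u" "forest_parent u \<noteq> m"
    and p: "ancestor (apex \<iota>) (apex (top_link u))" "ancestor (apex (top_link u)) v"
  shows "ancestor (deepest_on_path m v) (up_top (forest_parent u))"
proof -
  let ?q = "deepest_on_path m v" and ?p = "apex (top_link u)"
  note q = inner_link_deepest[OF m \<iota>]
  note cp = forest_parent_props[OF u(1,2)]
  have mp: "depth (up_top m) < depth ?p"
    using apex_inner_link_below_top[OF m \<iota>(1)] ancestor_depth_le[OF p(1)] by simp
  have "ancestor (up_top m) ?q" using q(1) unfolding lower_ends_up[OF m] by simp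
  then have "ancestor (up_top m) ?p"
    using ancestor_by_depth[OF ancestor_trans[OF _ q(4)] p(2)] mp by simp
  moreover have "?p \<noteq> up_top m" using mp by auto
  ultimately show ?thesis
    using up_links_disjoint_order[OF m hard_in_U[OF cp(1)] u(3) q(1,4) cp(3) p(2)] by simp
qed

lemma finite_inner_links: "u \<in> U \<Longrightarrow> finite (inner_links u)"
  using finite_opt_cover unfolding inner_links_def by auto

lemma inner_links_through_le1:
  assumes u: "u \<in> U" and \<iota>F: "\<iota> \<in> F" and v: "v \<in> verts \<iota>" and a: "ancestor (apex \<iota>) (up_top u)"
  shows "card {l \<in> inner_links u. v \<in> verts l} \<le> 1"
proof (cases "\<exists>l\<in>inner_links u. v \<in> verts l")
  case False
  then have "{l \<in> inner_links u. v \<in> verts l} = {}" by auto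
  then show ?thesis by (simp only:) simp
next
  case True
  then obtain l0 where l0: "l0 \<in> inner_links u" "v \<in> verts l0" by auto
  let ?q = "deepest_on_path u v"
  note q = inner_link_deepest[OF u l0]
  have sub: "{l \<in> inner_links u. v \<in> verts l} \<subseteq> {l \<in> inner_links u. ?q \<in> verts l}"
    using inner_link_deepest(2)[OF u] by blast
  have "?q \<in> verts u" "\<iota> \<in> L" using q(1) \<iota>F F_subset_L unfolding lower_ends_def by auto
  then have "card {l \<in> inner_links u. ?q \<in> verts l} \<le> 1"
    using inner_links_ply_le1[OF u \<iota>F _ verts_up_above_in_link[OF u _ v a q(4)]] by simp
  moreover have "finite {l \<in> inner_links u. ?q \<in> verts l}" using finite_inner_links[OF u] by simp
  ultimately show ?thesis using card_mono[OF _ sub] by linarith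
qed

lemma inner_links_through_le2:
  assumes u: "u \<in> U"
  shows "card {l \<in> inner_links u. v \<in> verts l} \<le> 2"
proof (cases "\<exists>l\<in>inner_links u. v \<in> verts l")
  case False
  then have "{l \<in> inner_links u. v \<in> verts l} = {}" by auto
  then show ?thesis by (simp only:) simp
next
  case True
  then obtain l0 where l0: "l0 \<in> inner_links u" "v \<in> verts l0" by auto
  have sub: "{l \<in> inner_links u. v \<in> verts l} \<subseteq> {l \<in> opt_cover u. deepest_on_path u v \<in> verts l}"
    using inner_link_deepest(2)[OF u] unfolding inner_links_def by blast
  have "deepest_on_path u v \<in> verts u"
    using inner_link_deepest(1)[OF u l0] unfolding lower_ends_def by simp
  then have "card {l \<in> opt_cover u. deepest_on_path u v \<in> verts l} \<le> 2"
    by (rule opt_cover_ply_le2[OF u])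
  moreover have "finite {l \<in> opt_cover u. deepest_on_path u v \<in> verts l}"
    using finite_opt_cover[OF u] by simp
  ultimately show ?thesis using card_mono[OF _ sub] by linarith
qed

end

section \<open>Removing one residue class of levels\<close>

lemma card_filter_singleton_le: "card {x \<in> {a}. P x} \<le> 1"
proof -
  have "{x \<in> {a}. P x} \<subseteq> {a}" by blast
  then show ?thesis using card_mono[of "{a}"] by simp
qed

lemma consecutive_avoiding_residue:
  fixes k j x y :: nat
  assumes j: "j < k" and avoid: "\<And>n. x \<le> n \<Longrightarrow> n \<le> y \<Longrightarrow> n mod k \<noteq> j" and xy: "x \<le> y"
  shows "y - x + 2 \<le> k"
proof (rule ccontr)
  assume short: "\<not> ?thesis"
  define i where "i = (j + k - x mod k) mod k"
  have "i < k" unfolding i_def using j by simp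
  then have "x + i \<le> y" using short xy by linarith
  have "(x + i) mod k = (x mod k + (j + k - x mod k)) mod k"
    unfolding i_def by (simp add: mod_add_left_eq mod_add_right_eq)
  also have "x mod k + (j + k - x mod k) = j + k"
    using mod_less_divisor[of k x] j by linarith
  also have "(j + k) mod k = j" using j by simp
  finally show False using avoid[of "x + i"] \<open>x + i \<le> y\<close> by simp
qed

text \<open>An inner link of a kept up-link is merged into the class of the top link of that up-link;
  the classes of the partition are the fibres of the resulting map \<open>root_link\<close>.\<close>

locale residue_removal = wtap_setting +
  fixes k j :: nat
  assumes j_less_k: "j < k"
begin

definition "kept u \<longleftrightarrow> u \<in> hard \<and> level u mod k \<noteq> j"

lemma owner_in_U: "has_owner l \<Longrightarrow> owner l \<in> U"
  using owner_props hard_in_U by blast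

lemma apex_top_link_owner_less:
  assumes "has_owner l"
  shows "depth (apex (top_link (owner l))) < depth (apex l)"
proof -
  have "depth (up_top (owner l)) < depth (apex l)"
    using apex_inner_link_below_top[OF owner_in_U[OF assms]] owner_props[OF assms] by blast
  then show ?thesis using ancestor_depth_le[OF apex_top_link[OF owner_in_U[OF assms]]] by simp
qed

function root_link :: "'a set \<Rightarrow> 'a set" where
  "root_link l = (if has_owner l \<and> kept (owner l) then root_link (top_link (owner l)) else l)"
  by auto
termination
proof (relation "measure (\<lambda>l. depth (apex l))")
  show "wf (measure (\<lambda>l. depth (apex l)))" by simp
  fix l assume "has_owner l \<and> kept (owner l)"
  then show "(top_link (owner l), l) \<in> measure (\<lambda>l. depth (apex l))"
    using apex_top_link_owner_less by simp
qed

declare root_link.simps[simp del]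

lemma root_link_step: "has_owner l \<Longrightarrow> kept (owner l) \<Longrightarrow> root_link l = root_link (top_link (owner l))"
  by (subst root_link.simps) simp

lemma root_link_self: "\<not> (has_owner l \<and> kept (owner l)) \<Longrightarrow> root_link l = l"
  by (subst root_link.simps) auto

lemma root_link_in_F: "l \<in> F \<Longrightarrow> root_link l \<in> F"
proof (induction l rule: root_link.induct)
  case (1 l)
  show ?case
  proof (cases "has_owner l \<and> kept (owner l)")
    case True
    then have "top_link (owner l) \<in> F" using top_link_in_F owner_in_U by blast
    then show ?thesis using 1 True root_link_step by simp
  next
    case False
    then show ?thesis using root_link_self 1 by simp
  qed
qed

lemma root_link_idem: "root_link (root_link l) = root_link l"
proof (induction l rule: root_link.induct)
  case (1 l)
  then show ?case
    using root_link_step root_link_self by (cases "has_owner l \<and> kept (owner l)") simp_all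
qed

lemma apex_root_link_ancestor: "l \<in> L \<Longrightarrow> ancestor (apex (root_link l)) (apex l)"
proof (induction l rule: root_link.induct)
  case (1 l)
  show ?case
  proof (cases "has_owner l \<and> kept (owner l)")
    case True
    let ?c = "owner l"
    have cU: "?c \<in> U" using owner_in_U True by blast
    have "top_link ?c \<in> L" using top_link_in_F[OF cU] F_subset_L by auto
    then have "ancestor (apex (root_link (top_link ?c))) (apex (top_link ?c))" using 1 True by simp
    moreover have "apex l \<in> lower_ends ?c" using apex_inner_link[OF cU] owner_props True by blast
    then have "ancestor (up_top ?c) (apex l)" unfolding lower_ends_up[OF cU] by simp
    ultimately have "ancestor (apex (root_link (top_link ?c))) (apex l)"
      using ancestor_trans[OF ancestor_trans[OF _ apex_top_link[OF cU]]] by blast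
    then show ?thesis using root_link_step True by simp
  next
    case False
    have "apex l \<in> V" using apex_in_verts[OF 1(2)] verts_in_V[OF 1(2)] by auto
    then show ?thesis using root_link_self[OF False] ancestor_refl by simp
  qed
qed

definition "link_class l0 = {l \<in> F. root_link l = l0}"
definition "class_owners l0 = {c. kept c \<and> root_link (top_link c) = l0}"
definition "owners_through l0 v = {c \<in> class_owners l0. \<exists>l\<in>inner_links c. v \<in> verts l}"

lemma class_owners_hard: "c \<in> class_owners l0 \<Longrightarrow> c \<in> hard"
  unfolding class_owners_def kept_def by auto

lemma class_owners_in_U: "c \<in> class_owners l0 \<Longrightarrow> c \<in> U"
  using class_owners_hard hard_in_U by blast

lemma class_owners_level: "c \<in> class_owners l0 \<Longrightarrow> level c mod k \<noteq> j"
  unfolding class_owners_def kept_def by auto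

lemma apex_class_root:
  assumes "c \<in> class_owners l0"
  shows "ancestor (apex l0) (up_top c)"
proof -
  have cU: "c \<in> U" using class_owners_in_U assms .
  have "ancestor (apex (root_link (top_link c))) (apex (top_link c))"
    using apex_root_link_ancestor top_link_in_F[OF cU] F_subset_L by auto
  then show ?thesis
    using assms apex_top_link[OF cU] ancestor_trans unfolding class_owners_def by auto
qed

lemma link_class_owner:
  assumes "l \<in> link_class l0" "l \<noteq> l0"
  shows "owner l \<in> class_owners l0" "l \<in> inner_links (owner l)"
proof -
  have h: "has_owner l \<and> kept (owner l)"
    using root_link_self assms unfolding link_class_def by fastforce
  then show "l \<in> inner_links (owner l)" using owner_props by auto
  have "root_link (top_link (owner l)) = l0"
    using root_link_step h assms unfolding link_class_def by auto
  then show "owner l \<in> class_owners l0" using h unfolding class_owners_def by simp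
qed

lemma forest_parent_in_class:
  assumes "u \<in> class_owners l0" "has_forest_parent u" "kept (forest_parent u)"
  shows "forest_parent u \<in> class_owners l0"
proof -
  have "root_link (top_link u) = root_link (top_link (forest_parent u))"
    using root_link_step assms(2,3) unfolding has_forest_parent_def forest_parent_def by simp
  then show ?thesis using assms(1,3) unfolding class_owners_def by simp
qed

lemma class_root_eq_top_link:
  assumes "u \<in> class_owners l0" "\<not> (has_forest_parent u \<and> kept (forest_parent u))"
  shows "l0 = top_link u"
  using root_link_self assms unfolding class_owners_def has_forest_parent_def forest_parent_def
  by auto

lemma forest_ancestor_levels_kept:
  "forest_ancestor a u \<Longrightarrow> a \<in> class_owners l0 \<Longrightarrow> u \<in> class_owners l0 \<Longrightarrow> level a \<le> n \<Longrightarrow> n \<le> level u \<Longrightarrow>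
    n mod k \<noteq> j"
proof (induction arbitrary: n rule: forest_ancestor.induct)
  case (base u)
  then have "n = level (forest_parent u) \<or> n = level u"
    using level_forest_parent[OF base(1,2)] by auto
  then show ?case
    using class_owners_level[OF base(3)] class_owners_level[OF base(4)] by (elim disjE) simp_all
next
  case (step a u)
  have "kept (forest_parent u)"
  proof (rule ccontr)
    assume "\<not> kept (forest_parent u)"
    then have "l0 = top_link u" using class_root_eq_top_link[OF step.prems(2)] by blast
    moreover have "depth (apex l0) \<le> depth (up_top a)"
      using apex_class_root[OF step.prems(1)] ancestor_depth_le by blast
    moreover have "depth (up_top a) < depth (up_top (forest_parent u))"
      using forest_ancestor_props[OF step.hyps(1)] by simp
    moreover have "depth (up_top (forest_parent u)) < depth (apex (top_link u))"
      using apex_inner_link_below_top forest_parent_props(1,2)[OF step.hyps(2,3)] hard_in_U by blast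
    ultimately show False by simp
  qed
  then have parent: "forest_parent u \<in> class_owners l0"
    using forest_parent_in_class step.prems(2) step.hyps(3) by blast
  show ?case
  proof (cases "n = level u")
    case True
    then show ?thesis using class_owners_level[OF step.prems(2)] by simp
  next
    case False
    then have "n \<le> level (forest_parent u)"
      using step.prems(4) level_forest_parent[OF step.hyps(2,3)] by simp
    then show ?thesis using step.IH[OF step.prems(1) parent step.prems(3)] by simp
  qed
qed

text \<open>The proof climbs along the forest parents of \<open>u\<close>, which stay in the class of \<open>l0\<close>, until
  \<open>m\<close> is reached.\<close>

lemma forest_ancestor_of_shared_vertex:
  assumes m: "m \<in> class_owners l0" and \<iota>: "\<iota> \<in> inner_links m" "v \<in> verts \<iota>"
  shows "u \<in> class_owners l0 \<Longrightarrow> A \<in> inner_links u \<Longrightarrow> x \<in> verts u \<Longrightarrow> x \<in> verts A \<Longrightarrow>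
    ancestor x v \<Longrightarrow> ancestor (deepest_on_path m v) (up_top u) \<Longrightarrow> forest_ancestor m u"
proof (induction "depth (up_top u)" arbitrary: u A x rule: less_induct)
  case less
  have mU: "m \<in> U" using class_owners_in_U[OF m] .
  have uH: "u \<in> hard" and uU: "u \<in> U"
    using class_owners_hard class_owners_in_U less.prems(1) by auto
  let ?q = "deepest_on_path m v" and ?p = "apex (top_link u)"
  note q = inner_link_deepest[OF mU \<iota>]
  have \<iota>F: "\<iota> \<in> F" using inner_links_in_F[OF mU \<iota>(1)] .
  have "ancestor ?p x"
    using ancestor_trans[OF apex_top_link[OF uU] verts_up_props(4)[OF uU less.prems(3)]] .
  then have pv: "ancestor ?p v" using ancestor_trans less.prems(5) by blast
  have "ancestor (apex \<iota>) (up_top u)" using ancestor_trans[OF q(3) less.prems(6)] .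
  then have \<iota>p: "ancestor (apex \<iota>) ?p"
    using apex_top_link_below[OF uU \<iota>F \<iota>(2) _ less.prems(2,4,3,5)] by blast
  then have mp: "depth (up_top m) < depth ?p"
    using apex_inner_link_below_top[OF mU \<iota>(1)] ancestor_depth_le by fastforce
  show ?case
  proof (cases "has_forest_parent u \<and> kept (forest_parent u)")
    case False
    then have "l0 = top_link u" using class_root_eq_top_link[OF less.prems(1)] by simp
    then show ?thesis using apex_class_root[OF m] ancestor_depth_le mp by fastforce
  next
    case True
    let ?c = "forest_parent u"
    have c: "?c \<in> class_owners l0" using forest_parent_in_class[OF less.prems(1)] True by blast
    have hp: "has_forest_parent u" using True by simp
    note cp = forest_parent_props[OF uH hp]
    show ?thesis
    proof (cases "?c = m")
      case True
      then show ?thesis using forest_ancestor.base[OF uH hp] by simp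
    next
      case False
      have "ancestor ?q (up_top ?c)"
        using deepest_above_forest_parent_top[OF mU \<iota> uH hp False \<iota>p pv] .
      moreover have "?p \<in> verts ?c" using cp(3) unfolding lower_ends_def by simp
      moreover have "?p \<in> verts (top_link u)"
        using apex_in_verts top_link_in_F[OF uU] F_subset_L by auto
      ultimately have "forest_ancestor m ?c" using less.hyps[OF cp(4) c cp(2)] pv by blast
      then show ?thesis using forest_ancestor.step[OF _ uH hp] by simp
    qed
  qed
qed

lemma owners_through_class: "c \<in> owners_through l0 v \<Longrightarrow> c \<in> class_owners l0"
  unfolding owners_through_def by auto

lemma owners_through_link:
  assumes "c \<in> owners_through l0 v"
  obtains l where "l \<in> inner_links c" "v \<in> verts l"
  using assms unfolding owners_through_def by auto

lemma finite_owners_through: "finite (owners_through l0 v)"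
proof -
  have "owners_through l0 v \<subseteq> U" using class_owners_in_U owners_through_class by blast
  then show ?thesis using finite_U by (rule finite_subset)
qed

lemma owners_through_order:
  assumes c: "c \<in> owners_through l0 v" and c': "c' \<in> owners_through l0 v" and ne: "c \<noteq> c'"
    and d: "depth (up_top c) \<le> depth (up_top c')"
  shows "ancestor (deepest_on_path c v) (up_top c')"
proof -
  have cU: "c \<in> U" and c'U: "c' \<in> U"
    using class_owners_in_U owners_through_class c c' by blast+
  obtain l where l: "l \<in> inner_links c" "v \<in> verts l" using owners_through_link[OF c] .
  obtain l' where l': "l' \<in> inner_links c'" "v \<in> verts l'" using owners_through_link[OF c'] .
  note q = inner_link_deepest[OF cU l] and q' = inner_link_deepest[OF c'U l']
  have "ancestor (up_top c) (deepest_on_path c v)" using q(1) unfolding lower_ends_up[OF cU] by simp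
  then have tv: "ancestor (up_top c) v" using ancestor_trans q(4) by blast
  have "ancestor (up_top c') (deepest_on_path c' v)" "up_top c' \<noteq> deepest_on_path c' v"
    using q'(1) unfolding lower_ends_up[OF c'U] by auto
  then have "depth (up_top c') < depth (deepest_on_path c' v)" by (rule ancestor_depth_less)
  then have "ancestor (up_top c) (deepest_on_path c' v)" "deepest_on_path c' v \<noteq> up_top c"
    using ancestor_by_depth[OF tv q'(4)] d by auto
  then show ?thesis using up_links_disjoint_order[OF cU c'U ne[symmetric] q(1,4) q'(1,4)] by simp
qed

lemma owners_through_comparable:
  assumes c: "c \<in> owners_through l0 v" and c': "c' \<in> owners_through l0 v" and ne: "c \<noteq> c'"
  shows "forest_ancestor c c' \<or> forest_ancestor c' c"
proof -
  have "forest_ancestor c c'"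
    if c: "c \<in> owners_through l0 v" and c': "c' \<in> owners_through l0 v" and ne: "c \<noteq> c'"
      and d: "depth (up_top c) \<le> depth (up_top c')" for c c'
  proof -
    have c'U: "c' \<in> U" using class_owners_in_U[OF owners_through_class[OF c']] .
    obtain l where l: "l \<in> inner_links c" "v \<in> verts l" using owners_through_link[OF c] .
    obtain l' where l': "l' \<in> inner_links c'" "v \<in> verts l'" using owners_through_link[OF c'] .
    note q' = inner_link_deepest[OF c'U l']
    have "deepest_on_path c' v \<in> verts c'" using q'(1) unfolding lower_ends_def by simp
    then show ?thesis
      using forest_ancestor_of_shared_vertex[OF owners_through_class[OF c] l
          owners_through_class[OF c'] l'(1) _ q'(2,4) owners_through_order[OF c c' ne d]]
      by simp
  qed
  from this[OF c c' ne] this[OF c' c ne[symmetric]] show ?thesis by linarith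
qed

lemma owners_through_least:
  assumes "owners_through l0 v \<noteq> {}"
  obtains s where "s \<in> owners_through l0 v"
    "\<And>c. c \<in> owners_through l0 v \<Longrightarrow> c \<noteq> s \<Longrightarrow> forest_ancestor s c"
proof -
  let ?S = "owners_through l0 v"
  have "Min (level ` ?S) \<in> level ` ?S" using finite_owners_through assms by (intro Min_in) auto
  then obtain s where s: "s \<in> ?S" "level s = Min (level ` ?S)" by auto
  have "forest_ancestor s c" if "c \<in> ?S" "c \<noteq> s" for c
  proof -
    have "level s \<le> level c" using s that finite_owners_through by simp
    then have "\<not> forest_ancestor c s" using forest_ancestor_props[of c s] by auto
    then show ?thesis using owners_through_comparable[OF s(1) that(1)] that(2) by auto
  qed
  then show ?thesis using that s(1) by blast
qed

lemma inj_on_level_owners_through: "inj_on level (owners_through l0 v)"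
proof (rule inj_onI)
  fix c c' assume cc': "c \<in> owners_through l0 v" "c' \<in> owners_through l0 v" "level c = level c'"
  show "c = c'"
  proof (rule ccontr)
    assume "c \<noteq> c'"
    then have "forest_ancestor c c' \<or> forest_ancestor c' c"
      using owners_through_comparable cc' by blast
    then show False using forest_ancestor_props cc'(3) by (metis less_irrefl)
  qed
qed

text \<open>The owners through \<open>v\<close> form a chain in the forest whose levels all avoid the residue \<open>j\<close>.\<close>

lemma card_owners_through: "card (owners_through l0 v) + 1 \<le> k"
proof (cases "owners_through l0 v = {}")
  case True
  then show ?thesis using j_less_k by simp
next
  case False
  let ?S = "owners_through l0 v"
  obtain s where s: "s \<in> ?S" "\<And>c. c \<in> ?S \<Longrightarrow> c \<noteq> s \<Longrightarrow> forest_ancestor s c"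
    using owners_through_least[OF False] by blast
  have level_s: "level s mod k \<noteq> j" using class_owners_level owners_through_class s(1) by blast
  have "level s - level s + 2 \<le> k"
    using consecutive_avoiding_residue[OF j_less_k, of "level s" "level s"] level_s le_antisym
    by blast
  then have k2: "2 \<le> k" by simp
  have "level c \<in> {level s..level s + (k - 2)}" if c: "c \<in> ?S" for c
  proof (cases "c = s")
    case True
    then show ?thesis by simp
  next
    case False
    have sc: "forest_ancestor s c" using s(2) c False by simp
    then have "level s < level c" using forest_ancestor_props by simp
    moreover have "level c - level s + 2 \<le> k"
      using consecutive_avoiding_residue[OF j_less_k] calculation
        forest_ancestor_levels_kept[OF sc owners_through_class[OF s(1)] owners_through_class[OF c]]
      by simp
    ultimately show ?thesis by simp
  qed
  then have "level ` ?S \<subseteq> {level s..level s + (k - 2)}" by blast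
  moreover note inj_on_level_owners_through[of l0 v]
  ultimately have "card (level ` ?S) \<le> card {level s..level s + (k - 2)}"
    "card (level ` ?S) = card ?S"
    using card_mono[OF finite_atLeastAtMost] card_image by blast+
  then show ?thesis using k2 by simp
qed

lemma inner_links_through_least_le2:
  assumes l0F: "l0 \<in> F" and s: "s \<in> owners_through l0 v"
  shows "card {l \<in> {l0}. v \<in> verts l} + card {l \<in> inner_links s. v \<in> verts l} \<le> 2"
proof -
  have sU: "s \<in> U" using class_owners_in_U[OF owners_through_class[OF s]] .
  show ?thesis
  proof (cases "v \<in> verts l0")
    case True
    have "ancestor (apex l0) (up_top s)" using apex_class_root owners_through_class s by blast
    then have "card {l \<in> inner_links s. v \<in> verts l} \<le> 1"
      using inner_links_through_le1[OF sU l0F True] by simp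
    moreover have "card {l \<in> {l0}. v \<in> verts l} \<le> 1" by (rule card_filter_singleton_le)
    ultimately show ?thesis by simp
  next
    case False
    then have "{l \<in> {l0}. v \<in> verts l} = {}" by auto
    then have "card {l \<in> {l0}. v \<in> verts l} = 0" by (simp only:) simp
    then show ?thesis using inner_links_through_le2[OF sU, of v] by linarith
  qed
qed

lemma inner_links_through_below_le1:
  assumes s: "s \<in> owners_through l0 v" and c: "c \<in> owners_through l0 v" "forest_ancestor s c"
  shows "card {l \<in> inner_links c. v \<in> verts l} \<le> 1"
proof -
  have sU: "s \<in> U" and cU: "c \<in> U" using class_owners_in_U owners_through_class s c by blast+
  obtain l where l: "l \<in> inner_links s" "v \<in> verts l" using owners_through_link[OF s] .
  have "depth (up_top s) < depth (up_top c)" using forest_ancestor_props[OF c(2)] by simp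
  then have "ancestor (deepest_on_path s v) (up_top c)"
    using owners_through_order[OF s c(1)] by fastforce
  then have "ancestor (apex l) (up_top c)"
    using ancestor_trans inner_link_deepest(3)[OF sU l] by blast
  then show ?thesis using inner_links_through_le1[OF cU inner_links_in_F[OF sU l(1)] l(2)] by simp
qed

lemma link_class_through_subset:
  "{l \<in> link_class l0. v \<in> verts l} \<subseteq>
    {l \<in> {l0}. v \<in> verts l} \<union> (\<Union>c\<in>owners_through l0 v. {l \<in> inner_links c. v \<in> verts l})"
proof
  fix l assume l: "l \<in> {l \<in> link_class l0. v \<in> verts l}"
  show "l \<in> {l \<in> {l0}. v \<in> verts l} \<union> (\<Union>c\<in>owners_through l0 v. {l \<in> inner_links c. v \<in> verts l})"
  proof (cases "l = l0")
    case True
    then show ?thesis using l by simp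
  next
    case False
    then have "owner l \<in> owners_through l0 v" "l \<in> inner_links (owner l)"
      using link_class_owner[of l l0] l unfolding owners_through_def by auto
    then show ?thesis using l by blast
  qed
qed

lemma link_class_thin:
  assumes l0F: "l0 \<in> F"
  shows "card {l \<in> link_class l0. v \<in> verts l} \<le> k"
proof -
  let ?S = "owners_through l0 v"
  let ?A = "{l \<in> {l0}. v \<in> verts l}" and ?B = "\<lambda>c. {l \<in> inner_links c. v \<in> verts l}"
  have finB: "finite (?B c)" if "c \<in> ?S" for c
    using finite_inner_links[OF class_owners_in_U[OF owners_through_class[OF that]]] by simp
  have "card {l \<in> link_class l0. v \<in> verts l} \<le> card (?A \<union> (\<Union>c\<in>?S. ?B c))"
    using link_class_through_subset finB finite_owners_through by (intro card_mono) auto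
  also have "\<dots> \<le> card ?A + (\<Sum>c\<in>?S. card (?B c))"
    using card_Un_le[of ?A] card_UN_le[OF finite_owners_through, of ?B]
    by (meson add_left_mono order_trans)
  also have "\<dots> \<le> k"
  proof (cases "?S = {}")
    case True
    have "card ?A \<le> 1" by (rule card_filter_singleton_le)
    then show ?thesis using True j_less_k by simp
  next
    case False
    obtain s where s: "s \<in> ?S" "\<And>c. c \<in> ?S \<Longrightarrow> c \<noteq> s \<Longrightarrow> forest_ancestor s c"
      using owners_through_least[OF False] by blast
    have "(\<Sum>c\<in>?S. card (?B c)) = card (?B s) + (\<Sum>c\<in>?S - {s}. card (?B c))"
      using sum.remove[OF finite_owners_through s(1)] by simp
    also have "(\<Sum>c\<in>?S - {s}. card (?B c)) \<le> (\<Sum>c\<in>?S - {s}. 1)"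
      using inner_links_through_below_le1[OF s(1)] s(2) by (intro sum_mono) auto
    also have "(\<Sum>c\<in>?S - {s}. 1) = card ?S - 1" using s(1) finite_owners_through by simp
    finally have "(\<Sum>c\<in>?S. card (?B c)) \<le> card (?B s) + (card ?S - 1)" by simp
    moreover have "0 < card ?S" using s(1) finite_owners_through card_gt_0_iff by blast
    ultimately show ?thesis
      using inner_links_through_least_le2[OF l0F s(1)] card_owners_through[of l0 v] by linarith
  qed
  finally show ?thesis .
qed

definition "classes = link_class ` {l0 \<in> F. root_link l0 = l0}"

lemma link_class_in_classes:
  "l \<in> F \<Longrightarrow> l \<in> link_class (root_link l) \<and> link_class (root_link l) \<in> classes"
  unfolding classes_def link_class_def using root_link_in_F root_link_idem by simp

lemma classes_partition: "partition_on F classes"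
proof (rule partition_onI)
  show "\<Union>classes = F"
  proof
    show "\<Union>classes \<subseteq> F" unfolding classes_def link_class_def by blast
    show "F \<subseteq> \<Union>classes" using link_class_in_classes by blast
  qed
  show "disjnt p q" if "p \<in> classes" "q \<in> classes" "p \<noteq> q" for p q
    using that unfolding classes_def link_class_def disjnt_def by auto
  show "{} \<notin> classes" unfolding classes_def link_class_def by auto
qed

lemma classes_thin: "C \<in> classes \<Longrightarrow> k_thin V E k C"
  unfolding classes_def k_thin_def using link_class_thin unfolding verts_def by auto

lemma kept_opt_cover_in_class:
  assumes u: "u \<in> U" and kept: "kept u"
  shows "opt_cover u \<subseteq> link_class (root_link (top_link u))"
proof
  fix l assume l: "l \<in> opt_cover u"
  have "root_link l = root_link (top_link u)"
  proof (cases "l = top_link u")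
    case False
    then have "l \<in> inner_links u" using l unfolding inner_links_def by simp
    moreover have "u \<in> hard" using kept unfolding kept_def by simp
    ultimately have "has_owner l" "owner l = u" using owner_eq unfolding has_owner_def by auto
    then show ?thesis using root_link_step kept by simp
  qed simp
  then show "l \<in> link_class (root_link (top_link u))"
    using l opt_cover_subset[OF u] unfolding link_class_def by auto
qed

lemma covered_by_class:
  assumes u: "u \<in> U" and not_removed: "u \<notin> {u \<in> hard. level u mod k = j}"
  shows "\<exists>C\<in>classes. link_edges E u \<subseteq> (\<Union>l\<in>C. link_edges E l)"
proof -
  obtain l where l: "l \<in> F" "lower_ends u \<subseteq> (\<Union>l'\<in>link_class (root_link l). lower_ends l')"
  proof (cases "u \<in> hard")
    case False
    then obtain l where l: "l \<in> F" "lower_ends u \<subseteq> lower_ends l" using u unfolding hard_def by auto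
    then have "lower_ends u \<subseteq> (\<Union>l'\<in>link_class (root_link l). lower_ends l')"
      using link_class_in_classes[OF l(1)] by blast
    then show ?thesis using that l(1) by blast
  next
    case True
    then have "kept u" using not_removed unfolding kept_def by auto
    then have "lower_ends u \<subseteq> (\<Union>l'\<in>link_class (root_link (top_link u)). lower_ends l')"
      using opt_cover_covers[OF u] kept_opt_cover_in_class[OF u] by blast
    then show ?thesis using that top_link_in_F[OF u] by blast
  qed
  have "link_class (root_link l) \<subseteq> L" using F_subset_L unfolding link_class_def by auto
  then have "link_edges E u \<subseteq> (\<Union>l'\<in>link_class (root_link l). link_edges E l')"
    using covered_iff_lower_ends[OF u] l(2) by simp
  then show ?thesis using link_class_in_classes[OF l(1)] by blast
qed

end

section \<open>The decomposition\<close>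

lemma exists_light_residue_class:
  fixes w :: "'b \<Rightarrow> real" and f :: "'b \<Rightarrow> nat"
  assumes A: "finite A" and k: "0 < k"
  shows "\<exists>j<k. real k * sum w {a \<in> A. f a mod k = j} \<le> sum w A"
proof (rule ccontr)
  assume "\<not> ?thesis"
  then have heavy: "sum w A / real k < sum w {a \<in> A. f a mod k = j}" if "j < k" for j
    using that k by (simp add: divide_less_eq mult.commute not_le)
  have "(\<lambda>a. f a mod k) ` A \<subseteq> {..<k}" using k by auto
  from sum.group[OF A finite_lessThan this, where h = w]
  have "sum w A = (\<Sum>j<k. sum w {a \<in> A. f a mod k = j})" by simp
  also have "\<dots> > (\<Sum>j<k. sum w A / real k)"
    using heavy k by (intro sum_strict_mono) auto
  also have "(\<Sum>j<k. sum w A / real k) = sum w A" using k by simp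
  finally show False by simp
qed

lemma le_mult_of_ceiling_inverse:
  fixes \<epsilon> x W :: real
  assumes \<epsilon>: "0 < \<epsilon>" and W: "0 \<le> W" and x: "real (nat \<lceil>1 / \<epsilon>\<rceil>) * x \<le> W"
  shows "x \<le> \<epsilon> * W"
proof (cases "x \<le> 0")
  case True
  have "0 \<le> \<epsilon> * W" using \<epsilon> W by simp
  then show ?thesis using True by linarith
next
  case False
  have "1 / \<epsilon> \<le> real (nat \<lceil>1 / \<epsilon>\<rceil>)" by linarith
  then have "1 / \<epsilon> * x \<le> W" using mult_right_mono[of _ _ x] False x by fastforce
  then show ?thesis using \<epsilon> by (simp add: divide_le_eq mult.commute)
qed

theorem theorem5:
  fixes V :: "'a set" and E L F U :: "'a set set" and w :: "'a set \<Rightarrow> real"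
    and r :: 'a and \<epsilon> :: real
  assumes "wtap_instance V E L w"
    and "r \<in> V"
    and "wtap_solution E L F"
    and "U \<subseteq> L" and "\<forall>u\<in>U. is_up_link E r u"
    and "\<forall>u\<in>U. \<forall>u'\<in>U. u \<noteq> u' \<longrightarrow> link_edges E u \<inter> link_edges E u' = {}"
    and "\<epsilon> > 0"
  shows "\<exists>\<C> R. partition_on F \<C> \<and> (\<forall>C\<in>\<C>. k_thin V E (nat \<lceil>1 / \<epsilon>\<rceil>) C) \<and>
           R \<subseteq> U \<and>
           (\<forall>u\<in>U - R. \<exists>C\<in>\<C>. link_edges E u \<subseteq> (\<Union>l\<in>C. link_edges E l)) \<and>
           sum w R \<le> \<epsilon> * sum w U"
proof -
  have "is_tree V E" using assms(1) unfolding wtap_instance_def by simp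
  then interpret wtap_setting V E r L w F U
    using assms by unfold_locales auto
  define k where "k = nat \<lceil>1 / \<epsilon>\<rceil>"
  have "0 < k" using \<open>\<epsilon> > 0\<close> unfolding k_def by simp
  then obtain j where j: "j < k" "real k * sum w {u \<in> hard. level u mod k = j} \<le> sum w hard"
    using exists_light_residue_class[OF finite_hard] by blast
  interpret residue_removal V E r L w F U k j
    using j(1) by unfold_locales
  let ?R = "{u \<in> hard. level u mod k = j}"
  have "0 \<le> sum w U" using weight_pos U_subset_L by (intro sum_nonneg) (auto intro: less_imp_le)
  moreover have "real k * sum w ?R \<le> sum w U" using j(2) weight_hard_le by (rule order_trans)
  ultimately have "sum w ?R \<le> \<epsilon> * sum w U"
    using le_mult_of_ceiling_inverse[OF \<open>\<epsilon> > 0\<close>] unfolding k_def by blast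
  moreover have "?R \<subseteq> U" using hard_in_U by blast
  ultimately show ?thesis
    unfolding k_def[symmetric] using classes_partition classes_thin covered_by_class
    by (intro exI[of _ classes] exI[of _ ?R]) blast
qed
end
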